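(* Let $f$ satisfy Hypothesis 1 or Hypothesis 2 (see context), let $\eta\in(0,1]$ and let $(\rho_1,\rho_2)$ be a classical solution of the viscous system (see context), $\sigma=\rho_1+\rho_2$. Then there exist $\mathcal{K}_5>0$ and $\theta_\alpha>1$, whose sizes depend only on $\alpha,\kappa,|\Omega|,T$ and the Lipschitz constants of $V_1,V_2$, such that \[ \|\partial_x\sigma\|_{L^{\theta_\alpha}([0,T]\times\Omega)}\le\mathcal{K}_5. \]
   Context: $\Omega=(0,L)$, $T>0$. Hypothesis 1: (H1) $f(s)=\frac{\lambda}{\alpha-1}s^\alpha$, $\alpha\in(0,1)$, $\lambda>0$; or (H2) $f(s)=\lambda s\log s$, $\lambda>0$. Hypothesis 2: (I1) $f\in C^{4,\beta}_{loc}(0,\infty)$, $f''>0$; (I2) $\frac{1}{\alpha\kappa}s^\alpha\le s^2f''(s)$ for $s>0$, $\alpha\in(0,1)$, $\kappa>0$; (I3) $|sf'''(s)/f''(s)|\le\kappa$; (I4) $\int_\Omega f(\mu)\,dx>-\mathcal{K}_{\inf}$ for all $\mu\in\mathscr{P}^{ac}(\Omega)$. Under Hypothesis 1, $\alpha,\kappa$ denote the corresponding constants determined by $f$. Viscous system, for $i\in\{1,2\}$: $\partial_t\rho_i=\eta\partial_{xx}\rho_i+\partial_x(\rho_i\partial_x(f'(\rho_1+\rho_2)+V_i))$ in $(0,T)\times\Omega$, $\rho_i(0)=\rho_{i,0}$, $\eta\partial_x\rho_i+\rho_i\partial_x(f'(\rho_1+\rho_2)+V_i)=0$ on $(0,T)\times\partial\Omega$.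 Standing assumptions: $V_1,V_2\in C^{3,1}(\overline\Omega)$, $\partial_xV_1=\partial_xV_2=0$ on $\partial\Omega$; $\rho_{i,0}\in C^{3,1}(\overline\Omega)$ probability densities, $\rho_{1,0}+\rho_{2,0}>0$, satisfying the zeroth- and first-order boundary compatibility conditions. A classical solution: $\rho_i\in C([0,T];C^3(\overline\Omega))\cap C^1([0,T];C^1(\overline\Omega))$ solving the system pointwise, with $\rho_1+\rho_2>0$. *)

theory Defs
  imports "HOL-Analysis.Analysis"
begin

text \<open>Omega = (0,L). One-sided (within the closed interval) derivatives.\<close>

definition dxL :: "real \<Rightarrow> (real \<Rightarrow> real) \<Rightarrow> real \<Rightarrow> real" where
  "dxL L g x = vector_derivative g (at x within {0..L})"

definition dtT :: "real \<Rightarrow> (real \<Rightarrow> real \<Rightarrow> real) \<Rightarrow> real \<Rightarrow> real \<Rightarrow> real" where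
  "dtT T u t x = vector_derivative (\<lambda>s. u s x) (at t within {0..T})"

definition C31_on :: "real \<Rightarrow> (real \<Rightarrow> real) \<Rightarrow> bool" where
  "C31_on L g \<longleftrightarrow>
     (\<forall>j<3. \<forall>x\<in>{0..L}. ((dxL L ^^ j) g) differentiable (at x within {0..L})) \<and>
     (\<exists>M. M-lipschitz_on {0..L} ((dxL L ^^ 3) g))"

definition lip_const :: "real \<Rightarrow> (real \<Rightarrow> real) \<Rightarrow> real" where
  "lip_const L V = Sup ((\<lambda>(x,y). \<bar>V x - V y\<bar> / \<bar>x - y\<bar>) `
                        {(x,y). x \<in> {0..L} \<and> y \<in> {0..L} \<and> x \<noteq> y})"

definition potential_ok :: "real \<Rightarrow> (real \<Rightarrow> real) \<Rightarrow> bool" where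
  "potential_ok L V \<longleftrightarrow> C31_on L V \<and> dxL L V 0 = 0 \<and> dxL L V L = 0"

definition hyp1 :: "(real \<Rightarrow> real) \<Rightarrow> real \<Rightarrow> real \<Rightarrow> bool" where
  "hyp1 f \<alpha> \<kappa> \<longleftrightarrow> 0 < \<alpha> \<and> \<alpha> < 1 \<and> 0 < \<kappa> \<and>
     ((\<exists>lam>0. (\<forall>s>0. f s = lam / (\<alpha> - 1) * s powr \<alpha>) \<and>
         (\<forall>s>0. s powr \<alpha> / (\<alpha> * \<kappa>) \<le> s\<^sup>2 * (deriv ^^ 2) f s) \<and>
         (\<forall>s>0. \<bar>s * (deriv ^^ 3) f s / (deriv ^^ 2) f s\<bar> \<le> \<kappa>))
      \<or>
      (\<exists>lam>0. (\<forall>s>0. f s = lam * s * ln s) \<and>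
         (\<forall>s>0. s / \<kappa> \<le> s\<^sup>2 * (deriv ^^ 2) f s) \<and>
         (\<forall>s>0. \<bar>s * (deriv ^^ 3) f s / (deriv ^^ 2) f s\<bar> \<le> \<kappa>)))"

definition hyp2 :: "real \<Rightarrow> (real \<Rightarrow> real) \<Rightarrow> real \<Rightarrow> real \<Rightarrow> bool" where
  "hyp2 L f \<alpha> \<kappa> \<longleftrightarrow> 0 < \<alpha> \<and> \<alpha> < 1 \<and> 0 < \<kappa> \<and>
     \<comment> \<open>(I1) f in C^{4,beta}_loc(0,inf), f'' > 0\<close>
     (\<forall>k<4. \<forall>s>0. ((deriv ^^ k) f) differentiable (at s)) \<and>
     (\<exists>\<beta>. 0 < \<beta> \<and> \<beta> \<le> 1 \<and>
        (\<forall>a b. 0 < a \<longrightarrow> a \<le> b \<longrightarrow> (\<exists>C. \<forall>x\<in>{a..b}. \<forall>y\<in>{a..b}.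
            \<bar>(deriv ^^ 4) f x - (deriv ^^ 4) f y\<bar> \<le> C * \<bar>x - y\<bar> powr \<beta>))) \<and>
     (\<forall>s>0. (deriv ^^ 2) f s > 0) \<and>
     \<comment> \<open>(I2)\<close>
     (\<forall>s>0. s powr \<alpha> / (\<alpha> * \<kappa>) \<le> s\<^sup>2 * (deriv ^^ 2) f s) \<and>
     \<comment> \<open>(I3)\<close>
     (\<forall>s>0. \<bar>s * (deriv ^^ 3) f s / (deriv ^^ 2) f s\<bar> \<le> \<kappa>) \<and>
     \<comment> \<open>(I4)\<close>
     (\<exists>Kinf. \<forall>\<mu>. (\<forall>x\<in>{0..L}. 0 \<le> \<mu> x) \<and> set_integrable lborel {0..L} \<mu> \<and>
         (LINT x:{0..L}|lborel. \<mu> x) = 1 \<longrightarrow>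
         (LINT x:{0..L}|lborel. f (\<mu> x)) > - Kinf)"

definition flux :: "real \<Rightarrow> (real \<Rightarrow> real) \<Rightarrow> real \<Rightarrow> (real \<Rightarrow> real) \<Rightarrow>
                    (real \<Rightarrow> real) \<Rightarrow> (real \<Rightarrow> real) \<Rightarrow> real \<Rightarrow> real" where
  "flux L f \<eta> V r s x = \<eta> * dxL L r x + r x * dxL L (\<lambda>y. deriv f (s y) + V y) x"

definition init_ok :: "real \<Rightarrow> (real \<Rightarrow> real) \<Rightarrow> bool" where
  "init_ok L r \<longleftrightarrow> C31_on L r \<and> (\<forall>x\<in>{0..L}. 0 \<le> r x) \<and>
     (LINT x:{0..L}|lborel. r x) = 1"

text \<open>Zeroth- and first-order boundary compatibility conditions for the initial data.
  R_i = d_x(flux_i) is the initial time derivative; the first-order condition is the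
  vanishing at the boundary of the time derivative of the flux at t = 0.\<close>
definition compat :: "real \<Rightarrow> (real \<Rightarrow> real) \<Rightarrow> real \<Rightarrow> (real \<Rightarrow> real) \<Rightarrow> (real \<Rightarrow> real)
                      \<Rightarrow> (real \<Rightarrow> real) \<Rightarrow> (real \<Rightarrow> real) \<Rightarrow> bool" where
  "compat L f \<eta> V1 V2 r1 r2 \<longleftrightarrow>
    (let s = (\<lambda>x. r1 x + r2 x);
         R1 = dxL L (flux L f \<eta> V1 r1 s);
         R2 = dxL L (flux L f \<eta> V2 r2 s);
         Rs = (\<lambda>x. R1 x + R2 x);
         G = (\<lambda>V r R x. \<eta> * dxL L R x + R x * dxL L (\<lambda>y. deriv f (s y) + V y) x
                      + r x * dxL L (\<lambda>y. (deriv ^^ 2) f (s y) * Rs y) x)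
     in flux L f \<eta> V1 r1 s 0 = 0 \<and> flux L f \<eta> V1 r1 s L = 0 \<and>
        flux L f \<eta> V2 r2 s 0 = 0 \<and> flux L f \<eta> V2 r2 s L = 0 \<and>
        G V1 r1 R1 0 = 0 \<and> G V1 r1 R1 L = 0 \<and> G V2 r2 R2 0 = 0 \<and> G V2 r2 R2 L = 0)"

text \<open>Regularity C([0,T];C^3([0,L])) \<inter> C^1([0,T];C^1([0,L])).\<close>
definition sol_regular :: "real \<Rightarrow> real \<Rightarrow> (real \<Rightarrow> real \<Rightarrow> real) \<Rightarrow> bool" where
  "sol_regular L T u \<longleftrightarrow>
     (\<forall>t\<in>{0..T}. \<forall>j<3. \<forall>x\<in>{0..L}. ((dxL L ^^ j) (u t)) differentiable (at x within {0..L})) \<and>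
     (\<forall>j\<le>3. continuous_on ({0..T} \<times> {0..L}) (\<lambda>(t,x). (dxL L ^^ j) (u t) x)) \<and>
     (\<forall>x\<in>{0..L}. \<forall>t\<in>{0..T}. (\<lambda>s. u s x) differentiable (at t within {0..T})) \<and>
     (\<forall>t\<in>{0..T}. \<forall>x\<in>{0..L}. (dtT T u t) differentiable (at x within {0..L})) \<and>
     continuous_on ({0..T} \<times> {0..L}) (\<lambda>(t,x). dtT T u t x) \<and>
     continuous_on ({0..T} \<times> {0..L}) (\<lambda>(t,x). dxL L (dtT T u t) x)"

definition classical_solution :: "real \<Rightarrow> real \<Rightarrow> (real \<Rightarrow> real) \<Rightarrow> real \<Rightarrow>
    (real \<Rightarrow> real) \<Rightarrow> (real \<Rightarrow> real) \<Rightarrow> (real \<Rightarrow> real) \<Rightarrow> (real \<Rightarrow> real) \<Rightarrow>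
    (real \<Rightarrow> real \<Rightarrow> real) \<Rightarrow> (real \<Rightarrow> real \<Rightarrow> real) \<Rightarrow> bool" where
  "classical_solution L T f \<eta> V1 V2 r10 r20 \<rho>1 \<rho>2 \<longleftrightarrow>
    (let \<sigma> = (\<lambda>t x. \<rho>1 t x + \<rho>2 t x);
         J1 = (\<lambda>t. flux L f \<eta> V1 (\<rho>1 t) (\<sigma> t));
         J2 = (\<lambda>t. flux L f \<eta> V2 (\<rho>2 t) (\<sigma> t))
     in sol_regular L T \<rho>1 \<and> sol_regular L T \<rho>2 \<and>
        (\<forall>t\<in>{0..T}. \<forall>x\<in>{0..L}. 0 < \<sigma> t x) \<and>
        (\<forall>x\<in>{0..L}. \<rho>1 0 x = r10 x \<and> \<rho>2 0 x = r20 x) \<and>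
        (\<forall>t\<in>{0<..<T}. \<forall>x\<in>{0<..<L}.
            J1 t differentiable (at x) \<and> dtT T \<rho>1 t x = dxL L (J1 t) x \<and>
            J2 t differentiable (at x) \<and> dtT T \<rho>2 t x = dxL L (J2 t) x) \<and>
        (\<forall>t\<in>{0<..<T}. J1 t 0 = 0 \<and> J1 t L = 0 \<and> J2 t 0 = 0 \<and> J2 t L = 0))"

end

theory Submission
  imports Defs
begin

text \<open>Write \<open>\<sigma> = \<rho>\<^sub>1 + \<rho>\<^sub>2\<close>, fix \<open>\<beta> = 1 - \<alpha>(1-\<alpha>)/2\<close> (so \<open>\<alpha> \<le> \<beta> < 1 < \<alpha> + \<beta>\<close>) and let
  \<open>D = \<integral> \<sigma>\<^bsup>\<beta>-1\<^esup> f''(\<sigma>) (\<partial>\<^sub>x\<sigma>)\<^sup>2\<close> be the entropy dissipation. Each \<open>\<rho>\<^sub>i\<close> stays nonnegative (the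
  cube of its negative part obeys a Gronwall inequality) and the mass \<open>\<integral> \<sigma> = 2\<close> is conserved.
  The entropy \<open>\<integral> -\<sigma>\<^sup>\<beta>/(\<beta>(1-\<beta>))\<close> decreases at rate at least \<open>D/4 - K\<close>: the viscous term has
  a sign, and the potentials cost at most \<open>\<integral> (1+\<sigma>)\<^bsup>\<beta>+1-\<alpha>\<^esup>\<close>, which is sublinear in \<open>D\<close> by the
  one-dimensional Sobolev bound \<open>sup (1+\<sigma>)\<^bsup>\<alpha>+\<beta>\<^esup> \<le> C (D+1)\<close>. As the entropy is controlled by the
  mass, \<open>\<integral>\<integral> D\<close> is bounded, and pointwise
  \<open>|\<partial>\<^sub>x\<sigma>|\<^sup>\<theta> \<le> \<kappa> \<sigma>\<^bsup>\<beta>-1\<^esup> f''(\<sigma>) (\<partial>\<^sub>x\<sigma>)\<^sup>2 + (1+\<sigma>)\<^bsup>1+\<alpha>+\<beta>\<^esup>\<close> with \<open>\<theta> = (1+\<alpha>+\<beta>)/2 > 1\<close>.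
  Only the lower bound \<open>s\<^sup>2 f''(s) \<ge> min(s\<^sup>\<alpha>, s)/\<kappa>\<close> enters, never the size of \<open>\<eta>\<close>.\<close>

section \<open>Calculus on intervals and rectangles\<close>

lemma continuous_on_slice:
  assumes "continuous_on (A \<times> B) (\<lambda>(t,x). h t x)" "t \<in> A"
  shows "continuous_on B (h t)"
proof -
  have "continuous_on B (\<lambda>x. (\<lambda>(t,x). h t x) (t, x))"
    by (rule continuous_on_compose2[OF assms(1)]) (auto intro!: continuous_intros simp: assms(2))
  then show ?thesis by simp
qed

lemma continuous_on_case_prod_compose:
  assumes "continuous_on S g" "continuous_on (A \<times> B) (\<lambda>(t,x). h t x)"
    "\<And>t x. t \<in> A \<Longrightarrow> x \<in> B \<Longrightarrow> h t x \<in> S"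
  shows "continuous_on (A \<times> B) (\<lambda>(t,x). g (h t x))"
proof -
  have "continuous_on (A \<times> B) (\<lambda>z. g ((\<lambda>(t,x). h t x) z))"
    by (rule continuous_on_compose2[OF assms(1) assms(2)]) (auto simp: assms(3))
  then show ?thesis by (simp add: case_prod_beta)
qed

lemma continuous_on_case_prod_add:
  fixes f g :: "'a::topological_space \<Rightarrow> 'b::topological_space \<Rightarrow> 'c::real_normed_vector"
  assumes "continuous_on X (\<lambda>(t,x). f t x)" "continuous_on X (\<lambda>(t,x). g t x)"
  shows "continuous_on X (\<lambda>(t,x). f t x + g t x)"
  using continuous_on_add[OF assms] by (simp add: case_prod_beta)

lemma continuous_on_case_prod_mult:
  fixes f g :: "'a::topological_space \<Rightarrow> 'b::topological_space \<Rightarrow> 'c::real_normed_algebra"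
  assumes "continuous_on X (\<lambda>(t,x). f t x)" "continuous_on X (\<lambda>(t,x). g t x)"
  shows "continuous_on X (\<lambda>(t,x). f t x * g t x)"
  using continuous_on_mult[OF assms] by (simp add: case_prod_beta)

lemma continuous_on_case_prod_snd:
  fixes g :: "'b::topological_space \<Rightarrow> 'c::topological_space" and A :: "'a::topological_space set"
  assumes "continuous_on B g"
  shows "continuous_on (A \<times> B) (\<lambda>(t,x). g x)"
proof -
  have "continuous_on (A \<times> B) (\<lambda>z. g (snd z))"
    by (rule continuous_on_compose2[OF assms continuous_on_snd]) auto
  then show ?thesis by (simp add: case_prod_beta)
qed

lemma integral_rectangle_iterated:
  fixes Q :: "real \<times> real \<Rightarrow> real"
  assumes "continuous_on ({0..T} \<times> {0..L}) Q"
  shows "integral ({0..T} \<times> {0..L}) Q = integral {0..T} (\<lambda>t. integral {0..L} (\<lambda>x. Q (t, x)))"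
proof -
  have "integral (cbox (0,0) (T,L)) Q = integral (cbox 0 T) (\<lambda>t. integral (cbox 0 L) (\<lambda>x. Q (t, x)))"
    by (rule integral_prod_continuous) (use assms in \<open>simp add: cbox_Pair_eq box_real\<close>)
  then show ?thesis by (simp add: cbox_Pair_eq box_real)
qed

lemma continuous_on_integral_slice:
  fixes Q :: "real \<Rightarrow> real \<Rightarrow> real"
  assumes "continuous_on ({0..T} \<times> {0..L}) (\<lambda>(t,x). Q t x)"
  shows "continuous_on {0..T} (\<lambda>t. integral {0..L} (Q t))"
proof -
  have "continuous_on {0..T} (\<lambda>t. integral (cbox 0 L) (Q t))"
    by (rule integral_continuous_on_param) (use assms in \<open>simp add: box_real\<close>)
  then show ?thesis by (simp add: box_real)
qed

lemma has_real_derivative_at_interior: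
  assumes "(g has_real_derivative g') (at x within {a..b})" "x \<in> {a<..<b}"
  shows "(g has_real_derivative g') (at x)"
  using assms at_within_interior[of x "{a..b}"] by simp

lemma dxL_has_derivative:
  assumes "0 < L" "x \<in> {0..L}" "g differentiable (at x within {0..L})"
  shows "(g has_real_derivative dxL L g x) (at x within {0..L})"
  using assms by (simp add: dxL_def has_real_derivative_iff_has_vector_derivative vector_derivative_works)

lemma dxL_eqI:
  assumes "0 < L" "x \<in> {0..L}" "(g has_real_derivative g') (at x within {0..L})"
  shows "dxL L g x = g'"
  using assms vector_derivative_within_closed_interval
  by (simp add: dxL_def has_real_derivative_iff_has_vector_derivative)

lemma dxL_has_derivative_at:
  assumes "x \<in> {0<..<L}" "g differentiable (at x)"
  shows "(g has_real_derivative dxL L g x) (at x)"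
proof -
  have e: "at x within {0..L} = at x" using assms(1) by (intro at_within_interior) simp
  have "(g has_vector_derivative vector_derivative g (at x)) (at x)"
    using assms(2) vector_derivative_works by blast
  then show ?thesis unfolding dxL_def e by (simp add: has_real_derivative_iff_has_vector_derivative)
qed

lemma dtT_has_derivative:
  assumes "0 < T" "t \<in> {0..T}" "(\<lambda>s. u s x) differentiable (at t within {0..T})"
  shows "((\<lambda>s. u s x) has_real_derivative dtT T u t x) (at t within {0..T})"
  using assms by (simp add: dtT_def has_real_derivative_iff_has_vector_derivative vector_derivative_works)

lemma has_real_derivative_min_zero_power:
  fixes n :: nat and x :: real
  assumes n: "2 \<le> n"
  shows "((\<lambda>r. (min r 0)^n) has_real_derivative real n * (min x 0)^(n-1)) (at x)"
proof -
  consider "x < 0" | "x > 0" | "x = 0" by linarith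
  then show ?thesis
  proof cases
    case 1
    have "((\<lambda>r. r^n) has_real_derivative real n * x^(n - Suc 0)) (at x)" by (rule DERIV_pow)
    then have "((\<lambda>r. (min r 0)^n) has_real_derivative real n * x^(n - Suc 0)) (at x)"
      by (rule has_field_derivative_transform_within_open[of _ _ _ "{..<0}"]) (use 1 in auto)
    then show ?thesis using 1 by simp
  next
    case 2
    have "((\<lambda>r. (min r 0)^n) has_real_derivative 0) (at x)"
      by (rule has_field_derivative_transform_within_open[OF DERIV_const, of "{0<..}"]) (use 2 n in auto)
    then show ?thesis using 2 n by (simp add: power_0_left)
  next
    case 3
    have small: "norm ((min h 0)^n / h) \<le> norm h" if h: "h \<noteq> 0" "norm h < 1" for h :: real
    proof -
      have "\<bar>min h 0\<bar>^n \<le> \<bar>h\<bar>^n" by (rule power_mono) auto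
      also have "\<bar>h\<bar>^n = \<bar>h\<bar> * \<bar>h\<bar> * \<bar>h\<bar>^(n-2)"
        using n by (metis (no_types) le_add_diff_inverse mult.assoc power_add power2_eq_square)
      also have "\<dots> \<le> \<bar>h\<bar> * \<bar>h\<bar> * 1"
        by (rule mult_left_mono) (use h in \<open>auto intro: power_le_one\<close>)
      finally show ?thesis using h by (simp add: abs_divide power_abs divide_le_eq)
    qed
    have "((\<lambda>h. (min h 0)^n / h) \<longlongrightarrow> 0) (at (0::real))"
    proof (rule tendsto_0_le[where f="\<lambda>h. h" and K=1])
      show "\<forall>\<^sub>F h in at (0::real). norm ((min h 0)^n / h) \<le> norm h * 1"
        using small unfolding eventually_at by (intro exI[of _ 1]) auto
    qed (rule tendsto_ident_at)
    then have "((\<lambda>r. (min r 0)^n) has_real_derivative 0) (at 0)"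
      using n unfolding DERIV_def by (simp add: zero_power)
    then show ?thesis using 3 n by (simp add: power_0_left)
  qed
qed

lemma nonpos_if_deriv_le_linear:
  fixes F F' :: "real \<Rightarrow> real"
  assumes t: "0 \<le> t" and cF: "continuous_on {0..t} F"
    and dF: "\<And>z. z \<in> {0<..<t} \<Longrightarrow> (F has_real_derivative F' z) (at z)"
    and F'_le: "\<And>z. z \<in> {0<..<t} \<Longrightarrow> F' z \<le> C * F z"
    and F0: "F 0 \<le> 0"
  shows "F t \<le> 0"
proof -
  define H where "H z = exp (- C * z) * F z" for z
  have "H t \<le> H 0"
  proof (rule DERIV_nonpos_imp_decreasing_open[OF t])
    fix z assume z: "0 < z" "z < t"
    have "(H has_real_derivative exp (- C * z) * (F' z - C * F z)) (at z)"
      unfolding H_def using z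
      by (auto intro!: derivative_eq_intros dF simp: algebra_simps)
    moreover have "exp (- C * z) * (F' z - C * F z) \<le> 0"
      using F'_le[of z] z by (simp add: mult_nonneg_nonpos)
    ultimately show "\<exists>y. DERIV H z :> y \<and> y \<le> 0" by blast
  qed (unfold H_def, intro continuous_intros cF)
  then have "exp (- C * t) * F t \<le> 0" using F0 by (simp add: H_def)
  then show ?thesis using exp_gt_zero[of "- C * t"] by (simp add: mult_le_0_iff)
qed

lemma mult_le_integral_add_variation:
  fixes w w' :: "real \<Rightarrow> real"
  assumes L: "0 < L" and cw: "continuous_on {0..L} w" and cw': "continuous_on {0..L} w'"
    and dw: "\<And>x. x \<in> {0..L} \<Longrightarrow> (w has_real_derivative w' x) (at x within {0..L})"
    and x: "x \<in> {0..L}"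
  shows "L * w x \<le> integral {0..L} w + L * integral {0..L} (\<lambda>x. \<bar>w' x\<bar>)"
proof -
  define V where "V = integral {0..L} (\<lambda>x. \<bar>w' x\<bar>)"
  have iw': "(\<lambda>x. \<bar>w' x\<bar>) integrable_on {0..L}"
    by (rule integrable_continuous_real) (intro continuous_intros cw')
  have increment: "\<bar>w q - w p\<bar> \<le> V" if pq: "0 \<le> p" "p \<le> q" "q \<le> L" for p q
  proof -
    have "(w' has_integral w q - w p) {p..q}"
    proof (rule fundamental_theorem_of_calculus[OF pq(2)])
      fix z assume "z \<in> {p..q}"
      with pq dw[of z] show "(w has_vector_derivative w' z) (at z within {p..q})"
        by (auto simp: has_real_derivative_iff_has_vector_derivative
                 intro: has_vector_derivative_within_subset)
    qed
    then have "\<bar>w q - w p\<bar> \<le> integral {p..q} (\<lambda>x. \<bar>w' x\<bar>)"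
      using integral_norm_bound_integral[of w' "{p..q}" "\<lambda>x. \<bar>w' x\<bar>"]
        integrable_on_subinterval[OF iw', of p q] pq
      by (auto simp: integral_unique)
    also have "\<dots> \<le> V" unfolding V_def
      by (rule integral_subset_le[OF _ integrable_on_subinterval[OF iw'] iw']) (use pq in auto)
    finally show ?thesis .
  qed
  obtain y where y: "y \<in> {0..L}" and ymin: "\<And>z. z \<in> {0..L} \<Longrightarrow> w y \<le> w z"
    using continuous_attains_inf[of "{0..L}" w] cw L by auto
  have "integral {0..L} (\<lambda>_. w y) \<le> integral {0..L} w"
    by (rule integral_le) (use integrable_continuous_real[OF cw] ymin in auto)
  then have "L * w y \<le> integral {0..L} w" using L by simp
  moreover have "w x - w y \<le> V"
    using increment[of y x] increment[of x y] x y by (cases "y \<le> x") auto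
  then have "L * (w x - w y) \<le> L * V" using L by (intro mult_left_mono) auto
  ultimately show ?thesis unfolding V_def by (simp add: algebra_simps)
qed

lemma absorb_sublinear_power:
  fixes K g y :: real
  assumes K: "0 \<le> K" and g: "0 \<le> g" "g < 1" and y: "1 \<le> y"
  shows "K * y powr g \<le> y / 4 + K * (1 + (4 * K) powr (1 / (1 - g)))"
proof (cases "y \<le> 1 + (4 * K) powr (1 / (1 - g))")
  case True
  have "y powr g \<le> y powr 1" by (rule powr_mono) (use g y in auto)
  then have "K * y powr g \<le> K * (1 + (4 * K) powr (1 / (1 - g)))"
    using True y K by (intro mult_left_mono) auto
  then show ?thesis using y by simp
next
  case False
  then have y1: "(4 * K) powr (1 / (1 - g)) < y" by simp
  have "4 * K \<le> y powr (1 - g)"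
  proof (cases "K = 0")
    case False
    have "((4 * K) powr (1 / (1 - g))) powr (1 - g) \<le> y powr (1 - g)"
      by (rule powr_mono2) (use g y1 in auto)
    then show ?thesis using g K False by (simp add: powr_powr)
  qed simp
  then have "4 * K * y powr g \<le> y powr (1 - g) * y powr g" by (rule mult_right_mono) simp
  also have "\<dots> = y" using y by (simp add: powr_add[symmetric])
  finally show ?thesis using K by (simp add: add_increasing2)
qed

section \<open>Pointwise inequalities for a diffusivity bounded below\<close>

text \<open>Throughout, \<open>v\<close> stands for \<open>f''(s)\<close> and \<open>p\<close> for \<open>\<partial>\<^sub>x\<sigma>\<close>; the weight \<open>s\<^bsup>b-1\<^esup> v p\<^sup>2\<close> is the
  density of the entropy dissipation.\<close>

context
  fixes a b \<kappa> :: real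
  assumes a: "0 < a" "a < 1" and \<kappa>: "0 < \<kappa>" and ab: "a \<le> b" "b < 1"
begin

lemma diffusivity_pos:
  assumes s: "0 < s" and lb: "min (s powr a) s / \<kappa> \<le> s\<^sup>2 * v"
  shows "0 < v"
proof -
  have "0 < min (s powr a) s / \<kappa>" using s \<kappa> by simp
  then have "0 < s\<^sup>2 * v" using lb by linarith
  then show ?thesis using s by (simp add: zero_less_mult_iff)
qed

lemma sq_le_dissipation_density:
  assumes s: "0 < s" and lb: "min (s powr a) s / \<kappa> \<le> s\<^sup>2 * v"
  shows "p\<^sup>2 \<le> \<kappa> * (s powr (b-1) * v * p\<^sup>2) * (1+s) powr (3-a-b)"
proof -
  have e1: "s powr (b-1) = s powr (b-3) * s\<^sup>2"
    using s powr_add[of s "b-3" 2] by simp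
  have m: "min (s powr a) s \<le> \<kappa> * (s\<^sup>2 * v)" using lb \<kappa> by (simp add: divide_le_eq mult.commute)
  have "s powr (b-3) * min (s powr a) s \<le> s powr (b-3) * (\<kappa> * (s\<^sup>2 * v))"
    by (rule mult_left_mono[OF m]) simp
  also have "\<dots> = \<kappa> * (s powr (b-1) * v)" using e1 by simp
  finally have A: "s powr (b-3) * min (s powr a) s \<le> \<kappa> * (s powr (b-1) * v)" .
  have c0: "0 \<le> 3 - a - b" using a ab by simp
  have "1 \<le> s powr (b-3) * min (s powr a) s * (1+s) powr (3-a-b)"
  proof (cases "1 \<le> s")
    case True
    have "s powr a \<le> s powr 1" by (rule powr_mono) (use a True in auto)
    then have mn: "min (s powr a) s = s powr a" using s by simp
    have "s powr (3-a-b) \<le> (1+s) powr (3-a-b)" by (rule powr_mono2) (use c0 s in auto)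
    then have "s powr (b-3) * s powr a * s powr (3-a-b) \<le> s powr (b-3) * s powr a * (1+s) powr (3-a-b)"
      by (intro mult_left_mono) auto
    moreover have "s powr (b-3) * s powr a * s powr (3-a-b) = 1"
      using s by (simp add: powr_add[symmetric])
    ultimately show ?thesis using mn by simp
  next
    case False
    have "s powr 1 \<le> s powr a" by (rule powr_mono') (use a False s in auto)
    then have mn: "min (s powr a) s = s" using s by simp
    have "s powr 0 \<le> s powr (b-2)" by (rule powr_mono') (use ab False s in auto)
    then have h1: "1 \<le> s powr (b-2)" using s by simp
    have h2: "1 \<le> (1+s) powr (3-a-b)" by (rule ge_one_powr_ge_zero) (use s c0 in auto)
    have "s powr (b-3) * s = s powr (b-2)"
      using s powr_add[of s "b-3" 1] by simp
    then have "s powr (b-3) * min (s powr a) s * (1+s) powr (3-a-b) = s powr (b-2) * (1+s) powr (3-a-b)"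
      using mn by simp
    also have "1 \<le> \<dots>" using h1 h2 by (metis mult_mono' mult_1 zero_le_one)
    finally show ?thesis by simp
  qed
  also have "\<dots> \<le> \<kappa> * (s powr (b-1) * v) * (1+s) powr (3-a-b)"
    by (rule mult_right_mono[OF A]) simp
  finally have "1 * p\<^sup>2 \<le> \<kappa> * (s powr (b-1) * v) * (1+s) powr (3-a-b) * p\<^sup>2"
    by (rule mult_right_mono) simp
  then show ?thesis by (simp add: algebra_simps)
qed

lemma weight_div_diffusivity_le:
  assumes s: "0 < s" and lb: "min (s powr a) s / \<kappa> \<le> s\<^sup>2 * v"
  shows "s powr (b-1) / v \<le> \<kappa> * (1+s) powr (b+1-a)"
proof -
  define m where "m = min (s powr a) s"
  have m0: "0 < m" unfolding m_def using s by simp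
  have v: "0 < v" by (rule diffusivity_pos[OF s lb])
  have v': "m / (\<kappa> * s\<^sup>2) \<le> v" using lb s \<kappa> unfolding m_def by (simp add: field_simps)
  have "s powr (b-1) / v \<le> s powr (b-1) / (m / (\<kappa> * s\<^sup>2))"
    by (rule divide_left_mono[OF v']) (use m0 s \<kappa> v in auto)
  also have "\<dots> = \<kappa> * (s powr (b-1) * s\<^sup>2 / m)" using m0 s \<kappa> by (simp add: field_simps)
  also have "s powr (b-1) * s\<^sup>2 = s powr (b+1)"
    using s powr_add[of s "b-1" 2] by (simp add: add.commute)
  also have "s powr (b+1) / m \<le> (1+s) powr (b+1-a)"
  proof (cases "1 \<le> s")
    case True
    have "s powr a \<le> s powr 1" by (rule powr_mono) (use a True in auto)
    then have "m = s powr a" using s unfolding m_def by simp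
    then have "s powr (b+1) / m = s powr (b+1-a)" by (simp add: powr_diff)
    also have "\<dots> \<le> (1+s) powr (b+1-a)" by (rule powr_mono2) (use a ab s in auto)
    finally show ?thesis .
  next
    case False
    have "s powr 1 \<le> s powr a" by (rule powr_mono') (use a False s in auto)
    then have "m = s" using s unfolding m_def by simp
    then have "s powr (b+1) / m = s powr b" using s powr_diff[of s "b+1" 1] by simp
    also have "\<dots> \<le> (1+s) powr b" by (rule powr_mono2) (use a ab s in auto)
    also have "\<dots> \<le> (1+s) powr (b+1-a)" by (rule powr_mono) (use a s in auto)
    finally show ?thesis .
  qed
  then have "\<kappa> * (s powr (b+1) / m) \<le> \<kappa> * (1+s) powr (b+1-a)"
    using \<kappa> by (intro mult_left_mono) auto
  finally show ?thesis .
qed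

text \<open>Young's inequality with exponents \<open>4/\<theta>\<close> and \<open>4/(3-a-b)\<close>, where \<open>\<theta> = (1+a+b)/2\<close>.\<close>

lemma abs_powr_le_dissipation_density:
  assumes s: "0 < s" and lb: "min (s powr a) s / \<kappa> \<le> s\<^sup>2 * v" and ab1: "1 < a + b"
  shows "\<bar>p\<bar> powr ((1+a+b)/2) \<le> \<kappa> * (s powr (b-1) * v * p\<^sup>2) + (1+s) powr (1+a+b)"
proof (cases "p = 0")
  case True
  then show ?thesis by simp
next
  case False
  define th where "th = (1+a+b)/2"
  define c where "c = 3-a-b"
  define A where "A = \<kappa> * (s powr (b-1) * v * p\<^sup>2)"
  define B where "B = (1+s) powr (1+a+b)"
  have A0: "0 < A" unfolding A_def using s diffusivity_pos[OF s lb] \<kappa> False by simp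
  have B0: "0 < B" unfolding B_def using s by simp
  have p2: "p\<^sup>2 \<le> A * (1+s) powr c"
    using sq_le_dissipation_density[OF s lb, of p] unfolding A_def c_def .
  have "(\<bar>p\<bar> powr 2) powr (th/2) = \<bar>p\<bar> powr (2*(th/2))" by (rule powr_powr)
  then have "\<bar>p\<bar> powr th = (p\<^sup>2) powr (th/2)" by simp
  also have "\<dots> \<le> (A * (1+s) powr c) powr (th/2)"
    by (rule powr_mono2) (use p2 th_def a ab in auto)
  also have "\<dots> = A powr (th/2) * B powr (c/4)"
  proof -
    have "((1+s) powr c) powr (th/2) = (1+s) powr (c * (th/2))" by (rule powr_powr)
    also have "\<dots> = ((1+s) powr (1+a+b)) powr (c/4)"
      by (simp add: powr_powr th_def algebra_simps)
    finally show ?thesis unfolding B_def by (simp add: powr_mult)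
  qed
  also have "\<dots> \<le> (th/2) * A + (c/4) * B"
    by (rule Youngs_inequality_0) (use A0 B0 th_def c_def a ab in \<open>auto simp: field_simps\<close>)
  also have "\<dots> \<le> A + B"
    using A0 B0 a ab ab1 unfolding th_def c_def
    by (intro add_mono mult_left_le_one_le) auto
  finally show ?thesis unfolding th_def A_def B_def .
qed

lemma weighted_abs_le_dissipation_density:
  assumes s: "0 < s" and lb: "min (s powr a) s / \<kappa> \<le> s\<^sup>2 * v" and lam: "0 < lam"
  shows "(1+s) powr ((a+b)/2 - 1) * \<bar>p\<bar> \<le> (\<kappa> * (s powr (b-1) * v * p\<^sup>2) / lam + lam * (1+s)) / 2"
proof -
  define X where "X = \<kappa> * (s powr (b-1) * v * p\<^sup>2)"
  define Y where "Y = 1 + s"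
  have X0: "0 \<le> X" unfolding X_def using s diffusivity_pos[OF s lb] \<kappa> by simp
  have Y0: "0 < Y" unfolding Y_def using s by simp
  have p2: "p\<^sup>2 \<le> X * Y powr (3-a-b)"
    using sq_le_dissipation_density[OF s lb, of p] unfolding X_def Y_def .
  have "(Y powr ((a+b)/2 - 1))\<^sup>2 = Y powr ((a+b)/2-1 + ((a+b)/2-1))"
    by (simp add: power2_eq_square powr_add[symmetric])
  also have "\<dots> = Y powr (a+b-2)" by (rule arg_cong[where f="\<lambda>z. Y powr z"]) simp
  finally have "((1+s) powr ((a+b)/2 - 1) * \<bar>p\<bar>)\<^sup>2 = Y powr (a+b-2) * p\<^sup>2"
    unfolding Y_def by (simp add: power_mult_distrib)
  also have "\<dots> \<le> Y powr (a+b-2) * (X * Y powr (3-a-b))"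
    by (rule mult_left_mono[OF p2]) simp
  also have "\<dots> = X * Y"
    using Y0 by (simp add: powr_add[symmetric])
  also have "X * Y \<le> ((X / lam + lam * Y) / 2)\<^sup>2"
  proof -
    have "((X / lam + lam * Y) / 2)\<^sup>2 - X * Y = ((X / lam - lam * Y) / 2)\<^sup>2"
      using lam by (simp add: power2_eq_square field_simps)
    then show ?thesis by (metis diff_ge_0_iff_ge zero_le_power2)
  qed
  finally have "((1+s) powr ((a+b)/2 - 1) * \<bar>p\<bar>)\<^sup>2 \<le> ((X / lam + lam * Y) / 2)\<^sup>2" .
  moreover have "0 \<le> (X / lam + lam * Y) / 2" using X0 Y0 lam by simp
  ultimately show ?thesis unfolding X_def Y_def by (rule power2_le_imp_le)
qed

lemma entropy_flux_density_ge:
  assumes s: "0 < s" and lb: "min (s powr a) s / \<kappa> \<le> s\<^sup>2 * v"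
    and \<eta>: "0 \<le> \<eta>" and P: "\<bar>P\<bar> \<le> l * s"
  shows "s powr (b-2) * p * (\<eta> * p + s * v * p + P) \<ge>
     (s powr (b-1) * v * p\<^sup>2) / 2 - (l\<^sup>2 * \<kappa> / 2) * (1+s) powr (b+1-a)"
proof -
  define q where "q = s powr (b-1)"
  have q0: "0 < q" unfolding q_def using s by simp
  have v: "0 < v" by (rule diffusivity_pos[OF s lb])
  have sq: "s powr (b-2) * s = q"
    unfolding q_def using s powr_add[of s "b-2" 1] by simp
  have "\<bar>s powr (b-2) * p * P\<bar> \<le> s powr (b-2) * \<bar>p\<bar> * (l * s)"
    by (simp add: abs_mult mult_left_mono P)
  also have "\<dots> = q * (\<bar>p\<bar> * l)" using sq by (simp add: algebra_simps)
  also have "\<bar>p\<bar> * l \<le> (v * p\<^sup>2 + l\<^sup>2 / v) / 2"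
  proof -
    have "(v * p\<^sup>2 + l\<^sup>2 / v) / 2 - \<bar>p\<bar> * l = (v * \<bar>p\<bar> - l)\<^sup>2 / (2 * v)"
      using v by (simp add: power2_eq_square field_simps)
    moreover have "0 \<le> (v * \<bar>p\<bar> - l)\<^sup>2 / (2 * v)" using v by simp
    ultimately show ?thesis by linarith
  qed
  then have "q * (\<bar>p\<bar> * l) \<le> q * ((v * p\<^sup>2 + l\<^sup>2 / v) / 2)" using q0 by simp
  finally have cross: "s powr (b-2) * p * P \<ge> - (q * v * p\<^sup>2 / 2 + l\<^sup>2 * (q / v) / 2)"
    by (simp add: algebra_simps)
  have "(l\<^sup>2 / 2) * (q / v) \<le> (l\<^sup>2 / 2) * (\<kappa> * (1+s) powr (b+1-a))"
    unfolding q_def by (rule mult_left_mono[OF weight_div_diffusivity_le[OF s lb]]) simp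
  moreover have "s powr (b-2) * p * (\<eta> * p + s * v * p + P) =
      \<eta> * (s powr (b-2) * p\<^sup>2) + q * v * p\<^sup>2 + s powr (b-2) * p * P"
    using sq by (simp add: algebra_simps power2_eq_square)
  moreover have "0 \<le> \<eta> * (s powr (b-2) * p\<^sup>2)" using \<eta> by simp
  ultimately show ?thesis using cross unfolding q_def by (simp add: algebra_simps)
qed

end

section \<open>Conservation laws with no-flux boundary conditions\<close>

locale no_flux_law =
  fixes L T :: real and u ux ut J :: "real \<Rightarrow> real \<Rightarrow> real"
  assumes L: "0 < L" and T: "0 < T"
  and cont_u: "continuous_on ({0..T}\<times>{0..L}) (\<lambda>(t,x). u t x)"
  and cont_ux: "continuous_on ({0..T}\<times>{0..L}) (\<lambda>(t,x). ux t x)"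
  and cont_ut: "continuous_on ({0..T}\<times>{0..L}) (\<lambda>(t,x). ut t x)"
  and cont_J: "continuous_on ({0..T}\<times>{0..L}) (\<lambda>(t,x). J t x)"
  and deriv_x: "\<And>t x. t \<in> {0..T} \<Longrightarrow> x \<in> {0..L} \<Longrightarrow> (u t has_real_derivative ux t x) (at x within {0..L})"
  and deriv_t: "\<And>t x. t \<in> {0..T} \<Longrightarrow> x \<in> {0..L} \<Longrightarrow> ((\<lambda>s. u s x) has_real_derivative ut t x) (at t within {0..T})"
  and flux_deriv: "\<And>t x. t \<in> {0<..<T} \<Longrightarrow> x \<in> {0<..<L} \<Longrightarrow> (J t has_real_derivative ut t x) (at x)"
  and flux_boundary: "\<And>t. t \<in> {0<..<T} \<Longrightarrow> J t 0 = 0 \<and> J t L = 0"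

lemma no_flux_law_add:
  assumes "no_flux_law L T u ux ut J" "no_flux_law L T v vx vt K"
  shows "no_flux_law L T (\<lambda>t x. u t x + v t x) (\<lambda>t x. ux t x + vx t x) (\<lambda>t x. ut t x + vt t x)
    (\<lambda>t x. J t x + K t x)"
proof -
  interpret u: no_flux_law L T u ux ut J by (fact assms(1))
  interpret v: no_flux_law L T v vx vt K by (fact assms(2))
  show ?thesis
    by unfold_locales
      (auto intro!: continuous_on_case_prod_add DERIV_add u.cont_u v.cont_u u.cont_ux v.cont_ux
        u.cont_ut v.cont_ut u.cont_J v.cont_J u.deriv_x v.deriv_x u.deriv_t v.deriv_t
        u.flux_deriv v.flux_deriv u.L u.T simp: u.flux_boundary v.flux_boundary)
qed

locale no_flux_functional = no_flux_law +
  fixes S :: "real set" and \<Phi> \<Phi>1 \<Phi>2 :: "real \<Rightarrow> real"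
  assumes open_S: "open S" and u_in_S: "\<And>t x. t \<in> {0..T} \<Longrightarrow> x \<in> {0..L} \<Longrightarrow> u t x \<in> S"
  and deriv_\<Phi>: "\<And>y. y \<in> S \<Longrightarrow> (\<Phi> has_real_derivative \<Phi>1 y) (at y)"
  and deriv_\<Phi>1: "\<And>y. y \<in> S \<Longrightarrow> (\<Phi>1 has_real_derivative \<Phi>2 y) (at y)"
  and cont_\<Phi>2: "continuous_on S \<Phi>2"
begin

definition functional :: "real \<Rightarrow> real" where
  "functional t = integral {0..L} (\<lambda>x. \<Phi> (u t x))"

definition production :: "real \<Rightarrow> real" where
  "production t = integral {0..L} (\<lambda>x. \<Phi>2 (u t x) * ux t x * J t x)"

lemma continuous_on_\<Phi>_u: "continuous_on ({0..T}\<times>{0..L}) (\<lambda>(t,x). \<Phi> (u t x))"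
proof (rule continuous_on_case_prod_compose[OF _ cont_u u_in_S])
  show "continuous_on S \<Phi>"
    by (rule DERIV_continuous_on[where D=\<Phi>1]) (metis at_within_open deriv_\<Phi> open_S)
qed

lemma continuous_on_\<Phi>1_u: "continuous_on ({0..T}\<times>{0..L}) (\<lambda>(t,x). \<Phi>1 (u t x))"
proof (rule continuous_on_case_prod_compose[OF _ cont_u u_in_S])
  show "continuous_on S \<Phi>1"
    by (rule DERIV_continuous_on[where D=\<Phi>2]) (metis at_within_open deriv_\<Phi>1 open_S)
qed

lemma continuous_on_production_density:
  "continuous_on ({0..T}\<times>{0..L}) (\<lambda>(t,x). \<Phi>2 (u t x) * ux t x * J t x)"
  by (intro continuous_on_case_prod_mult continuous_on_case_prod_compose[OF cont_\<Phi>2 cont_u u_in_S]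
      cont_ux cont_J)

lemma continuous_on_functional: "continuous_on {0..T} functional"
  unfolding functional_def by (rule continuous_on_integral_slice[OF continuous_on_\<Phi>_u])

lemma has_integral_time_derivative_density:
  assumes t: "t \<in> {0<..<T}"
  shows "((\<lambda>x. \<Phi>1 (u t x) * ut t x) has_integral - production t) {0..L}"
proof -
  have t': "t \<in> {0..T}" using t by auto
  define w where "w x = \<Phi>1 (u t x) * J t x" for x
  have parts: "((\<lambda>x. \<Phi>2 (u t x) * ux t x * J t x + \<Phi>1 (u t x) * ut t x) has_integral (w L - w 0)) {0..L}"
  proof (rule fundamental_theorem_of_calculus_interior)
    show "continuous_on {0..L} w"
      unfolding w_def using continuous_on_slice[OF continuous_on_\<Phi>1_u t'] continuous_on_slice[OF cont_J t']
      by (intro continuous_on_mult)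
    fix x assume x: "x \<in> {0<..<L}"
    then have x': "x \<in> {0..L}" by auto
    have "((\<lambda>x. \<Phi>1 (u t x)) has_real_derivative \<Phi>2 (u t x) * ux t x) (at x)"
      using DERIV_chain2[OF deriv_\<Phi>1[OF u_in_S[OF t' x']]
          has_real_derivative_at_interior[OF deriv_x[OF t' x'] x]] .
    from DERIV_mult[OF this flux_deriv[OF t x]]
    show "(w has_vector_derivative (\<Phi>2 (u t x) * ux t x * J t x + \<Phi>1 (u t x) * ut t x)) (at x)"
      unfolding w_def by (simp add: has_real_derivative_iff_has_vector_derivative[symmetric] algebra_simps)
  qed (use L in auto)
  have w_boundary: "w L - w 0 = 0" unfolding w_def using flux_boundary[OF t] by simp
  have "(\<lambda>x. \<Phi>2 (u t x) * ux t x * J t x) integrable_on {0..L}"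
    by (rule integrable_continuous_real)
      (use continuous_on_slice[OF continuous_on_production_density t'] in simp)
  from has_integral_diff[OF parts[unfolded w_boundary] integrable_integral[OF this]]
  show ?thesis unfolding production_def by simp
qed

lemma functional_has_derivative:
  assumes t: "t \<in> {0<..<T}"
  shows "(functional has_real_derivative - production t) (at t)"
proof -
  have "((\<lambda>t. integral (cbox 0 L) (\<lambda>x. \<Phi> (u t x))) has_real_derivative
      integral (cbox 0 L) (\<lambda>x. \<Phi>1 (u t x) * ut t x)) (at t within {0..T})"
  proof (rule leibniz_rule_field_derivative)
    fix s x assume s: "s \<in> {0..T}" and x: "x \<in> cbox 0 L"
    show "((\<lambda>s. \<Phi> (u s x)) has_real_derivative \<Phi>1 (u s x) * ut s x) (at s within {0..T})"
      using DERIV_chain2[OF deriv_\<Phi>[OF u_in_S] deriv_t] s x by (simp add: box_real)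
  next
    fix s assume s: "s \<in> {0..T}"
    show "(\<lambda>x. \<Phi> (u s x)) integrable_on cbox 0 L"
      using integrable_continuous_real[OF continuous_on_slice[OF continuous_on_\<Phi>_u s]]
      by (simp add: box_real)
  next
    show "continuous_on ({0..T} \<times> cbox 0 L) (\<lambda>(s, x). \<Phi>1 (u s x) * ut s x)"
      using continuous_on_case_prod_mult[OF continuous_on_\<Phi>1_u cont_ut] by (simp add: box_real)
  qed (use t in auto)
  then show ?thesis
    using has_real_derivative_at_interior[of functional _ t 0 T] t
      integral_unique[OF has_integral_time_derivative_density[OF t]]
    unfolding functional_def by (simp add: box_real)
qed

lemma functional_increment:
  assumes "0 \<le> a" "a \<le> b" "b \<le> T"
  shows "((\<lambda>t. - production t) has_integral functional b - functional a) {a..b}"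
proof (rule fundamental_theorem_of_calculus_interior[OF assms(2)])
  show "continuous_on {a..b} functional"
    using continuous_on_subset[OF continuous_on_functional] assms by auto
  fix t assume "t \<in> {a<..<b}"
  then have "t \<in> {0<..<T}" using assms by auto
  then show "(functional has_vector_derivative - production t) (at t)"
    using functional_has_derivative by (simp add: has_real_derivative_iff_has_vector_derivative[symmetric])
qed

end

lemma neg_cube_production_ge:
  fixes u p b B \<eta> :: real
  assumes \<eta>: "0 < \<eta>" and b: "\<bar>b\<bar> \<le> B"
  shows "- (6 * min u 0) * p * (\<eta> * p + u * b) \<ge> - (3 * B\<^sup>2 / (2 * \<eta>)) * (- ((min u 0)^3))"
proof (cases "u < 0")
  case False
  then show ?thesis by (simp add: min_def)
next
  case True
  have "- (u\<^sup>2 * b\<^sup>2) \<le> 4 * \<eta> * (p * (\<eta> * p + u * b))"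
  proof -
    have "(2 * \<eta> * p + u * b)\<^sup>2 = 4 * \<eta> * (p * (\<eta> * p + u * b)) + u\<^sup>2 * b\<^sup>2"
      by (simp add: power2_eq_square algebra_simps)
    then show ?thesis using zero_le_power2[of "2 * \<eta> * p + u * b"] by linarith
  qed
  moreover have "b\<^sup>2 \<le> B\<^sup>2"
    using b by (metis abs_ge_zero abs_le_square_iff order_trans power2_abs power_mono)
  then have "u\<^sup>2 * b\<^sup>2 \<le> u\<^sup>2 * B\<^sup>2" by (intro mult_left_mono) auto
  ultimately have "- (u\<^sup>2 * B\<^sup>2) \<le> 4 * \<eta> * (p * (\<eta> * p + u * b))" by linarith
  then have "- (u\<^sup>2 * B\<^sup>2) / (4 * \<eta>) \<le> p * (\<eta> * p + u * b)"
    using \<eta> by (simp add: field_simps)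
  then have "(- 6 * u) * (- (u\<^sup>2 * B\<^sup>2) / (4 * \<eta>)) \<le> (- 6 * u) * (p * (\<eta> * p + u * b))"
    using True by (intro mult_left_mono) auto
  moreover have "- (3 * B\<^sup>2 / (2 * \<eta>)) * (- ((min u 0)^3)) = (- 6 * u) * (- (u\<^sup>2 * B\<^sup>2) / (4 * \<eta>))"
    using True \<eta> by (simp add: min_def power2_eq_square power3_eq_cube field_simps)
  moreover have "(- 6 * u) * (p * (\<eta> * p + u * b)) = - (6 * min u 0) * p * (\<eta> * p + u * b)"
    using True by (simp add: min_def)
  ultimately show ?thesis by linarith
qed

lemma nonneg_if_integral_neg_cube_nonpos:
  fixes u :: "real \<Rightarrow> real"
  assumes L: "0 < L" and cont: "continuous_on {0..L} u"
    and int: "integral {0..L} (\<lambda>x. - ((min (u x) 0)^3)) \<le> 0" and x: "x \<in> {0..L}"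
  shows "0 \<le> u x"
proof -
  have nonneg: "0 \<le> - ((min r 0)^3)" for r :: real
    by (simp add: power3_eq_cube mult_nonneg_nonpos)
  have cont': "continuous_on {0..L} (\<lambda>x. - ((min (u x) 0)^3))"
    by (intro continuous_on_minus continuous_on_power continuous_on_min cont continuous_on_const)
  have "0 \<le> integral {0..L} (\<lambda>x. - ((min (u x) 0)^3))"
    by (rule integral_nonneg[OF integrable_continuous_real[OF cont'] nonneg])
  then have "((\<lambda>x. - ((min (u x) 0)^3)) has_integral 0) (cbox 0 L)"
    using integrable_integral[OF integrable_continuous_real[OF cont']] int by (simp add: box_real)
  then have "- ((min (u x) 0)^3) = 0"
  proof (rule has_integral_0_cbox_imp_0[rotated 2])
    show "continuous_on (cbox 0 L) (\<lambda>x. - ((min (u x) 0)^3))" using cont' by (simp add: box_real)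
    show "box 0 L \<noteq> {}" using L by (simp add: box_real)
    show "x \<in> cbox 0 L" using x by (simp add: box_real)
  qed (rule nonneg)
  then show ?thesis by (simp add: min_def split: if_splits)
qed

text \<open>The functional \<open>-\<integral> (min u 0)\<^sup>3\<close> vanishes initially and obeys a Gronwall inequality.\<close>

lemma nonneg_if_no_flux_drift_diffusion:
  assumes law: "no_flux_law L T u ux ut J"
    and J: "\<And>t x. t \<in> {0..T} \<Longrightarrow> x \<in> {0..L} \<Longrightarrow> J t x = \<eta> * ux t x + u t x * b t x"
    and cont_b: "continuous_on ({0..T}\<times>{0..L}) (\<lambda>(t,x). b t x)"
    and \<eta>: "0 < \<eta>" and init: "\<And>x. x \<in> {0..L} \<Longrightarrow> 0 \<le> u 0 x"
    and t: "t \<in> {0..T}" and x: "x \<in> {0..L}"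
  shows "0 \<le> u t x"
proof -
  interpret no_flux_functional L T u ux ut J UNIV "\<lambda>r. - ((min r 0)^3)"
    "\<lambda>r. - (3 * ((min r 0)^2))" "\<lambda>r. - (6 * min r 0)"
  proof (rule no_flux_functional.intro[OF law], unfold_locales)
    fix y :: real
    show "((\<lambda>r. - ((min r 0)^3)) has_real_derivative - (3 * ((min y 0)^2))) (at y)"
      using DERIV_minus[OF has_real_derivative_min_zero_power[of 3 y]] by simp
    show "((\<lambda>r. - (3 * ((min r 0)^2))) has_real_derivative - (6 * min y 0)) (at y)"
      using DERIV_minus[OF DERIV_cmult[OF has_real_derivative_min_zero_power[of 2 y], of 3]] by simp
  qed (auto intro!: continuous_on_minus continuous_on_mult continuous_on_min)
  obtain B where B: "\<And>z. z \<in> {0..T}\<times>{0..L} \<Longrightarrow> norm ((\<lambda>(t,x). b t x) z) \<le> B"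
    using continuous_on_compact_bound[OF compact_Times[OF compact_Icc compact_Icc] cont_b] by blast
  define C where "C = 3 * B\<^sup>2 / (2 * \<eta>)"
  have rate: "- production s \<le> C * functional s" if s: "s \<in> {0..T}" for s
  proof -
    have "integral {0..L} (\<lambda>x. - C * (- ((min (u s x) 0)^3))) \<le> production s"
      unfolding production_def
    proof (rule integral_le)
      fix y assume y: "y \<in> {0..L}"
      show "- C * (- ((min (u s y) 0)^3)) \<le> - (6 * min (u s y) 0) * ux s y * J s y"
        unfolding J[OF s y] C_def using neg_cube_production_ge[OF \<eta>, of "b s y" B] B[of "(s,y)"] s y
        by simp
    next
      show "(\<lambda>x. - C * (- ((min (u s x) 0)^3))) integrable_on {0..L}"
        by (rule integrable_continuous_real)
          (intro continuous_intros continuous_on_slice[OF continuous_on_\<Phi>_u s, simplified])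
      show "(\<lambda>x. - (6 * min (u s x) 0) * ux s x * J s x) integrable_on {0..L}"
        by (rule integrable_continuous_real)
          (use continuous_on_slice[OF continuous_on_production_density s] in simp)
    qed
    then show ?thesis unfolding functional_def by simp
  qed
  have initial: "functional 0 = 0"
  proof -
    have "integral {0..L} (\<lambda>x. - ((min (u 0 x) 0)^3)) = integral {0..L} (\<lambda>x. 0)"
      by (rule integral_cong) (use init in \<open>fastforce simp: min_def\<close>)
    then show ?thesis unfolding functional_def by simp
  qed
  have "functional t \<le> 0"
  proof (rule nonpos_if_deriv_le_linear[where F=functional and F'="\<lambda>z. - production z" and C=C])
    show "0 \<le> t" using t by simp
    show "continuous_on {0..t} functional"
      by (rule continuous_on_subset[OF continuous_on_functional]) (use t in auto)
    fix z assume "z \<in> {0<..<t}"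
    then have z: "z \<in> {0<..<T}" using t by auto
    then show "(functional has_real_derivative - production z) (at z)"
      by (rule functional_has_derivative)
    show "- production z \<le> C * functional z" using rate z by simp
  qed (simp add: initial)
  then show ?thesis
    using nonneg_if_integral_neg_cube_nonpos[OF L continuous_on_slice[OF cont_u t] _ x]
    unfolding functional_def by simp
qed

text \<open>What the proof uses of Hypotheses 1 and 2: \<open>f'\<close> is \<open>C\<^sup>1\<close> on \<open>(0,\<infinity>)\<close> and
  \<open>s\<^sup>2 f''(s) \<ge> min(s\<^sup>\<alpha>, s)/\<kappa>\<close>, which covers both \<open>s\<^sup>\<alpha>/(\<alpha>\<kappa>)\<close> and \<open>s/\<kappa>\<close>.\<close>

definition pressure_bounds :: "real \<Rightarrow> real \<Rightarrow> (real \<Rightarrow> real) \<Rightarrow> bool" where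
  "pressure_bounds a \<kappa> f \<longleftrightarrow> 0 < a \<and> a < 1 \<and> 0 < \<kappa> \<and>
     (\<forall>s>0. (deriv f has_real_derivative (deriv ^^ 2) f s) (at s)) \<and>
     continuous_on {0<..} ((deriv ^^ 2) f) \<and>
     (\<forall>s>0. min (s powr a) s / \<kappa> \<le> s\<^sup>2 * (deriv ^^ 2) f s)"

lemma has_real_derivative_eq_on_pos:
  fixes g h :: "real \<Rightarrow> real"
  assumes "\<And>s. 0 < s \<Longrightarrow> g s = h s" "(h has_real_derivative D) (at s)" "0 < s"
  shows "(g has_real_derivative D) (at s)"
  by (rule has_field_derivative_transform_within_open[OF assms(2), of "{0<..}"]) (use assms in auto)

lemma deriv2_continuous_if_eq_on_pos:
  fixes f g g1 g2 :: "real \<Rightarrow> real"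
  assumes eq: "\<And>s. 0 < s \<Longrightarrow> f s = g s"
    and dg: "\<And>s. 0 < s \<Longrightarrow> (g has_real_derivative g1 s) (at s)"
    and dg1: "\<And>s. 0 < s \<Longrightarrow> (g1 has_real_derivative g2 s) (at s)"
    and cont: "continuous_on {0<..} g2"
  shows "(\<forall>s>0. (deriv f has_real_derivative (deriv ^^ 2) f s) (at s)) \<and>
    continuous_on {0<..} ((deriv ^^ 2) f)"
proof -
  have "(f has_real_derivative g1 s) (at s)" if "0 < s" for s
    by (rule has_real_derivative_eq_on_pos[OF _ dg[OF that] that]) (rule eq)
  then have "deriv f s = g1 s" if "0 < s" for s
    using DERIV_imp_deriv that by blast
  then have d: "(deriv f has_real_derivative g2 s) (at s)" if "0 < s" for s
    by (rule has_real_derivative_eq_on_pos[OF _ dg1[OF that] that])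
  then have "(deriv ^^ 2) f s = g2 s" if "0 < s" for s
    using DERIV_imp_deriv[OF d[OF that]] by (simp add: numeral_2_eq_2)
  then show ?thesis
    using d cont continuous_on_cong[of "{0<..}" "{0<..}" "(deriv ^^ 2) f" g2] by auto
qed

lemma deriv2_continuous_power:
  fixes f :: "real \<Rightarrow> real"
  assumes "\<And>s. 0 < s \<Longrightarrow> f s = c * s powr a"
  shows "(\<forall>s>0. (deriv f has_real_derivative (deriv ^^ 2) f s) (at s)) \<and>
    continuous_on {0<..} ((deriv ^^ 2) f)"
proof (rule deriv2_continuous_if_eq_on_pos[OF assms])
  fix s :: real assume s: "0 < s"
  show "((\<lambda>z. c * z powr a) has_real_derivative c * (a * s powr (a - 1))) (at s)"
    by (rule DERIV_cmult, rule has_real_derivative_powr) (use s in auto)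
  show "((\<lambda>z. c * (a * z powr (a - 1))) has_real_derivative c * (a * ((a - 1) * s powr (a - 1 - 1)))) (at s)"
    by (rule DERIV_cmult, rule DERIV_cmult, rule has_real_derivative_powr) (use s in auto)
next
  show "continuous_on {0<..} (\<lambda>s. c * (a * ((a - 1) * s powr (a - 1 - 1))))"
    by (intro continuous_intros) auto
qed

lemma deriv2_continuous_mult_ln:
  fixes f :: "real \<Rightarrow> real"
  assumes "\<And>s. 0 < s \<Longrightarrow> f s = c * s * ln s"
  shows "(\<forall>s>0. (deriv f has_real_derivative (deriv ^^ 2) f s) (at s)) \<and>
    continuous_on {0<..} ((deriv ^^ 2) f)"
proof (rule deriv2_continuous_if_eq_on_pos[OF assms])
  fix s :: real assume s: "0 < s"
  show "((\<lambda>z. c * z * ln z) has_real_derivative c * (ln s + 1)) (at s)"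
    using s by (auto intro!: derivative_eq_intros simp: field_simps)
  show "((\<lambda>z. c * (ln z + 1)) has_real_derivative c / s) (at s)"
    using s by (auto intro!: derivative_eq_intros simp: field_simps)
next
  show "continuous_on {0<..} (\<lambda>s::real. c / s)" by (intro continuous_intros) auto
qed

lemma pressure_bounds_if_hyp1:
  assumes "hyp1 f a \<kappa>"
  shows "pressure_bounds a \<kappa> f"
proof -
  have a: "0 < a" "a < 1" and \<kappa>: "0 < \<kappa>" using assms unfolding hyp1_def by auto
  have min_le: "min (s powr a) s / \<kappa> \<le> s powr a / (a * \<kappa>)" "min (s powr a) s / \<kappa> \<le> s / \<kappa>"
    if "0 < s" for s
  proof -
    have "min (s powr a) s / \<kappa> \<le> s powr a / \<kappa>" using \<kappa> by (simp add: divide_right_mono)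
    also have "\<dots> \<le> s powr a / (a * \<kappa>)"
      using a \<kappa> by (intro divide_left_mono) (auto intro: mult_left_le_one_le)
    finally show "min (s powr a) s / \<kappa> \<le> s powr a / (a * \<kappa>)" .
    show "min (s powr a) s / \<kappa> \<le> s / \<kappa>" using \<kappa> by (simp add: divide_right_mono)
  qed
  from assms consider (power) lam where
      "\<And>s. 0 < s \<Longrightarrow> f s = lam / (a - 1) * s powr a"
      "\<And>s. 0 < s \<Longrightarrow> s powr a / (a * \<kappa>) \<le> s\<^sup>2 * (deriv ^^ 2) f s"
    | (entropy) lam where "\<And>s. 0 < s \<Longrightarrow> f s = lam * s * ln s"
      "\<And>s. 0 < s \<Longrightarrow> s / \<kappa> \<le> s\<^sup>2 * (deriv ^^ 2) f s"
    unfolding hyp1_def by blast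
  then show ?thesis
  proof cases
    case power
    with deriv2_continuous_power[of f] min_le(1) show ?thesis
      unfolding pressure_bounds_def using a \<kappa> by (meson order_trans)
  next
    case entropy
    with deriv2_continuous_mult_ln[of f] min_le(2) show ?thesis
      unfolding pressure_bounds_def using a \<kappa> by (meson order_trans)
  qed
qed

lemma pressure_bounds_if_hyp2:
  assumes "hyp2 L f a \<kappa>"
  shows "pressure_bounds a \<kappa> f"
proof -
  have a: "0 < a" "a < 1" and \<kappa>: "0 < \<kappa>"
    and smooth: "\<forall>k<4. \<forall>s>0. ((deriv ^^ k) f) differentiable (at s)"
    and lower: "\<forall>s>0. s powr a / (a * \<kappa>) \<le> s\<^sup>2 * (deriv ^^ 2) f s"
    using assms unfolding hyp2_def by auto
  have "(deriv f has_real_derivative (deriv ^^ 2) f s) (at s)" if "0 < s" for s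
    using smooth[rule_format, of 1 s] that
    by (simp add: numeral_2_eq_2 DERIV_deriv_iff_real_differentiable)
  moreover have "continuous_on {0<..} ((deriv ^^ 2) f)"
    using smooth[rule_format, of 2]
    by (intro continuous_at_imp_continuous_on) (auto intro: differentiable_imp_continuous_within)
  moreover have "min (s powr a) s / \<kappa> \<le> s\<^sup>2 * (deriv ^^ 2) f s" if "0 < s" for s
  proof -
    have "min (s powr a) s / \<kappa> \<le> s powr a / \<kappa>" using \<kappa> by (simp add: divide_right_mono)
    also have "\<dots> \<le> s powr a / (a * \<kappa>)"
      using a \<kappa> by (intro divide_left_mono) (auto intro: mult_left_le_one_le)
    finally show ?thesis using lower[rule_format, OF that] by linarith
  qed
  ultimately show ?thesis unfolding pressure_bounds_def using a \<kappa> by auto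
qed

lemma abs_deriv_le_lip_const:
  fixes V V' :: "real \<Rightarrow> real"
  assumes L: "0 < L"
    and dV: "\<And>x. x \<in> {0..L} \<Longrightarrow> (V has_real_derivative V' x) (at x within {0..L})"
    and cont: "continuous_on {0..L} V'" and x: "x \<in> {0..L}"
  shows "\<bar>V' x\<bar> \<le> lip_const L V"
proof -
  define Q where "Q = (\<lambda>(x,y). \<bar>V x - V y\<bar> / \<bar>x - y\<bar>) ` {(x,y). x \<in> {0..L} \<and> y \<in> {0..L} \<and> x \<noteq> y}"
  obtain B where B: "\<And>x. x \<in> {0..L} \<Longrightarrow> norm (V' x) \<le> B"
    using continuous_on_compact_bound[OF compact_Icc cont] by blast
  have "q \<le> B" if "q \<in> Q" for q
  proof -
    obtain y z where yz: "y \<in> {0..L}" "z \<in> {0..L}" "y \<noteq> z" and q: "q = \<bar>V y - V z\<bar> / \<bar>y - z\<bar>"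
      using \<open>q \<in> Q\<close> unfolding Q_def by auto
    have "norm (V y - V z) \<le> B * norm (y - z)"
      by (rule field_differentiable_bound[OF convex_real_interval(5) dV B yz(1,2)])
    then show ?thesis unfolding q using yz by (simp add: divide_le_eq)
  qed
  then have bdd: "bdd_above Q" unfolding bdd_above_def by blast
  have "((\<lambda>y. \<bar>(V y - V x) / (y - x)\<bar>) \<longlongrightarrow> \<bar>V' x\<bar>) (at x within {0..L})"
    using dV[OF x] unfolding has_field_derivative_iff by (rule tendsto_rabs)
  moreover have "\<forall>\<^sub>F y in at x within {0..L}. \<bar>(V y - V x) / (y - x)\<bar> \<le> Sup Q"
    unfolding eventually_at_filter
  proof (rule always_eventually, intro allI impI)
    fix y assume y: "y \<noteq> x" "y \<in> {0..L}"
    have "\<bar>V y - V x\<bar> / \<bar>y - x\<bar> \<in> Q" unfolding Q_def using x y by (auto intro!: image_eqI[of _ _ "(y,x)"])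
    then show "\<bar>(V y - V x) / (y - x)\<bar> \<le> Sup Q" using cSup_upper[OF _ bdd] by (simp add: abs_divide)
  qed
  moreover have "\<not> trivial_limit (at x within {0..L})" using x L by (simp add: trivial_limit_within)
  ultimately have "\<bar>V' x\<bar> \<le> Sup Q" by (rule tendsto_upperbound)
  then show ?thesis unfolding lip_const_def Q_def .
qed

lemma C31_on_differentiable:
  assumes "C31_on L g" "x \<in> {0..L}"
  shows "g differentiable (at x within {0..L})" "dxL L g differentiable (at x within {0..L})"
proof -
  have "\<forall>j<3. \<forall>x\<in>{0..L}. ((dxL L ^^ j) g) differentiable (at x within {0..L})"
    using assms(1) unfolding C31_on_def by blast
  from this[rule_format, of 0 x] this[rule_format, of 1 x] assms(2)
  show "g differentiable (at x within {0..L})" "dxL L g differentiable (at x within {0..L})"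
    by simp_all
qed

lemma potential_deriv_props:
  assumes L: "0 < L" and V: "potential_ok L V"
  shows "\<And>x. x \<in> {0..L} \<Longrightarrow> (V has_real_derivative dxL L V x) (at x within {0..L})"
    and "continuous_on {0..L} (dxL L V)"
    and "\<And>x. x \<in> {0..L} \<Longrightarrow> \<bar>dxL L V x\<bar> \<le> lip_const L V"
proof -
  have C: "C31_on L V" using V unfolding potential_ok_def by simp
  show dV: "\<And>x. x \<in> {0..L} \<Longrightarrow> (V has_real_derivative dxL L V x) (at x within {0..L})"
    using dxL_has_derivative[OF L] C31_on_differentiable(1)[OF C] by blast
  show cont: "continuous_on {0..L} (dxL L V)"
    using C31_on_differentiable(2)[OF C] differentiable_imp_continuous_within
      continuous_on_eq_continuous_within by blast
  show "\<And>x. x \<in> {0..L} \<Longrightarrow> \<bar>dxL L V x\<bar> \<le> lip_const L V"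
    by (rule abs_deriv_le_lip_const[OF L dV cont])
qed

lemma init_ok_props:
  assumes L: "0 < L" and r: "init_ok L r"
  shows "continuous_on {0..L} r" "integral {0..L} r = 1" "\<And>x. x \<in> {0..L} \<Longrightarrow> 0 \<le> r x"
proof -
  have C: "C31_on L r" using r unfolding init_ok_def by simp
  show cont: "continuous_on {0..L} r"
    using C31_on_differentiable(1)[OF C] differentiable_imp_continuous_within
      continuous_on_eq_continuous_within by blast
  have "set_integrable lborel {0..L} r"
    unfolding set_integrable_def by (rule borel_integrable_compact[OF compact_Icc cont])
  moreover have "(LINT x:{0..L}|lborel. r x) = 1" using r unfolding init_ok_def by simp
  ultimately show "integral {0..L} r = 1" using set_borel_integral_eq_integral(2) by metis
  show "\<And>x. x \<in> {0..L} \<Longrightarrow> 0 \<le> r x" using r unfolding init_ok_def by simp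
qed

lemma sol_regular_props:
  assumes L: "0 < L" and T: "0 < T" and S: "sol_regular L T u"
  shows "continuous_on ({0..T}\<times>{0..L}) (\<lambda>(t,x). u t x)"
    "continuous_on ({0..T}\<times>{0..L}) (\<lambda>(t,x). dxL L (u t) x)"
    "continuous_on ({0..T}\<times>{0..L}) (\<lambda>(t,x). dtT T u t x)"
    "\<And>t x. t \<in> {0..T} \<Longrightarrow> x \<in> {0..L} \<Longrightarrow> (u t has_real_derivative dxL L (u t) x) (at x within {0..L})"
    "\<And>t x. t \<in> {0..T} \<Longrightarrow> x \<in> {0..L} \<Longrightarrow> ((\<lambda>s. u s x) has_real_derivative dtT T u t x) (at t within {0..T})"
proof -
  have space: "\<forall>t\<in>{0..T}. \<forall>j<3. \<forall>x\<in>{0..L}. ((dxL L ^^ j) (u t)) differentiable (at x within {0..L})"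
    and cont: "\<forall>j\<le>3. continuous_on ({0..T} \<times> {0..L}) (\<lambda>(t,x). (dxL L ^^ j) (u t) x)"
    and time: "\<forall>x\<in>{0..L}. \<forall>t\<in>{0..T}. (\<lambda>s. u s x) differentiable (at t within {0..T})"
    and "continuous_on ({0..T} \<times> {0..L}) (\<lambda>(t,x). dtT T u t x)"
    using S unfolding sol_regular_def by blast+
  then show "continuous_on ({0..T} \<times> {0..L}) (\<lambda>(t,x). dtT T u t x)" by blast
  show "continuous_on ({0..T}\<times>{0..L}) (\<lambda>(t,x). u t x)" using cont[rule_format, of 0] by simp
  show "continuous_on ({0..T}\<times>{0..L}) (\<lambda>(t,x). dxL L (u t) x)" using cont[rule_format, of 1] by simp
  fix t x assume t: "t \<in> {0..T}" and x: "x \<in> {0..L}"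
  show "(u t has_real_derivative dxL L (u t) x) (at x within {0..L})"
    by (rule dxL_has_derivative[OF L x]) (use space[rule_format, OF t, of 0 x] x in simp)
  show "((\<lambda>s. u s x) has_real_derivative dtT T u t x) (at t within {0..T})"
    by (rule dtT_has_derivative[OF T t]) (use time t x in blast)
qed

section \<open>A priori estimates for the two-species system\<close>

text \<open>Any \<open>\<beta>\<close> with \<open>\<alpha> \<le> \<beta> < 1 < \<alpha> + \<beta>\<close> would do.\<close>

definition entropy_exponent :: "real \<Rightarrow> real" where
  "entropy_exponent a = 1 - a * (1 - a) / 2"

text \<open>\<open>sobolev_const\<close> is the constant \<open>C\<close> of the bound \<open>sup (1+\<sigma>)\<^bsup>\<alpha>+\<beta>\<^esup> \<le> C\<^sup>2 (D+1)\<close>, and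
  \<open>\<gamma> = absorption_exponent a\<close> solves \<open>\<beta> + 1 - \<alpha> = 1 + (\<alpha>+\<beta>) \<gamma>\<close>, so that the potential
  terms grow like \<open>(D+1)\<^sup>\<gamma>\<close> with \<open>\<gamma> < 1\<close>.\<close>

definition sobolev_const :: "real \<Rightarrow> real \<Rightarrow> real" where
  "sobolev_const L \<kappa> = (L + 2) / L + (\<kappa> + L + 2) / 2"

definition absorption_exponent :: "real \<Rightarrow> real" where
  "absorption_exponent a = (entropy_exponent a - a) / (a + entropy_exponent a)"

definition potential_const :: "real \<Rightarrow> real \<Rightarrow> real \<Rightarrow> real \<Rightarrow> real" where
  "potential_const L a \<kappa> l =
     (l\<^sup>2 * \<kappa> / 2) * (L + 2) * ((sobolev_const L \<kappa>)\<^sup>2) powr absorption_exponent a"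

definition entropy_rate_const :: "real \<Rightarrow> real \<Rightarrow> real \<Rightarrow> real \<Rightarrow> real" where
  "entropy_rate_const L a \<kappa> l = 1/4 + potential_const L a \<kappa> l *
     (1 + (4 * potential_const L a \<kappa> l) powr (1 / (1 - absorption_exponent a)))"

definition dissipation_bound :: "real \<Rightarrow> real \<Rightarrow> real \<Rightarrow> real \<Rightarrow> real \<Rightarrow> real" where
  "dissipation_bound L T a \<kappa> l = 4 * (L + 2) / (entropy_exponent a * (1 - entropy_exponent a))
     + 4 * entropy_rate_const L a \<kappa> l * T"

definition gradient_bound :: "real \<Rightarrow> real \<Rightarrow> real \<Rightarrow> real \<Rightarrow> real \<Rightarrow> real" where
  "gradient_bound L T a \<kappa> l = (\<kappa> + (sobolev_const L \<kappa>)\<^sup>2 * (L + 2)) * dissipation_bound L T a \<kappa> l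
     + (sobolev_const L \<kappa>)\<^sup>2 * (L + 2) * T"

lemma entropy_exponent_bounds:
  assumes "0 < a" "a < 1"
  shows "a \<le> entropy_exponent a" "entropy_exponent a < 1" "1 < a + entropy_exponent a"
    "0 < entropy_exponent a"
proof -
  have "0 < a * (1 - a)" "a * (1 - a) < 1"
    using assms mult_strict_mono[of a 1 "1 - a" 1] by auto
  then show "entropy_exponent a < 1" "0 < entropy_exponent a" unfolding entropy_exponent_def by auto
  have "0 \<le> (1 - a) * (1 - a/2)" using assms by (intro mult_nonneg_nonneg) auto
  then show "a \<le> entropy_exponent a" unfolding entropy_exponent_def by (simp add: algebra_simps)
  have "0 < a * (1 + a)" using assms by (intro mult_pos_pos) auto
  then show "1 < a + entropy_exponent a" unfolding entropy_exponent_def by (simp add: algebra_simps)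
qed

text \<open>\<open>V1'\<close> and \<open>V2'\<close> stand for \<open>\<partial>\<^sub>x V\<^sub>i\<close>, and \<open>l\<close> bounds both.\<close>

locale two_species_solution =
  fixes L T a \<kappa> l \<eta> :: real and f V1' V2' :: "real \<Rightarrow> real"
    and \<rho>1 \<rho>2 \<rho>1x \<rho>2x \<rho>1t \<rho>2t :: "real \<Rightarrow> real \<Rightarrow> real"
  assumes pressure: "pressure_bounds a \<kappa> f" and \<eta>: "0 < \<eta>"
    and law1: "no_flux_law L T \<rho>1 \<rho>1x \<rho>1t (\<lambda>t x. \<eta> * \<rho>1x t x + \<rho>1 t x *
       ((deriv ^^ 2) f (\<rho>1 t x + \<rho>2 t x) * (\<rho>1x t x + \<rho>2x t x) + V1' x))"
    and law2: "no_flux_law L T \<rho>2 \<rho>2x \<rho>2t (\<lambda>t x. \<eta> * \<rho>2x t x + \<rho>2 t x *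
       ((deriv ^^ 2) f (\<rho>1 t x + \<rho>2 t x) * (\<rho>1x t x + \<rho>2x t x) + V2' x))"
    and cont_V1': "continuous_on {0..L} V1'" and bound_V1': "\<And>x. x \<in> {0..L} \<Longrightarrow> \<bar>V1' x\<bar> \<le> l"
    and cont_V2': "continuous_on {0..L} V2'" and bound_V2': "\<And>x. x \<in> {0..L} \<Longrightarrow> \<bar>V2' x\<bar> \<le> l"
    and pos: "\<And>t x. t \<in> {0..T} \<Longrightarrow> x \<in> {0..L} \<Longrightarrow> 0 < \<rho>1 t x + \<rho>2 t x"
    and init1: "\<And>x. x \<in> {0..L} \<Longrightarrow> 0 \<le> \<rho>1 0 x"
    and init2: "\<And>x. x \<in> {0..L} \<Longrightarrow> 0 \<le> \<rho>2 0 x"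
    and mass0: "integral {0..L} (\<lambda>x. \<rho>1 0 x + \<rho>2 0 x) = 2"
begin

abbreviation "f2 \<equiv> (deriv ^^ 2) f"
abbreviation "\<beta> \<equiv> entropy_exponent a"

abbreviation flux1 :: "real \<Rightarrow> real \<Rightarrow> real" where
  "flux1 t x \<equiv> \<eta> * \<rho>1x t x + \<rho>1 t x * (f2 (\<rho>1 t x + \<rho>2 t x) * (\<rho>1x t x + \<rho>2x t x) + V1' x)"

abbreviation flux2 :: "real \<Rightarrow> real \<Rightarrow> real" where
  "flux2 t x \<equiv> \<eta> * \<rho>2x t x + \<rho>2 t x * (f2 (\<rho>1 t x + \<rho>2 t x) * (\<rho>1x t x + \<rho>2x t x) + V2' x)"

lemma L: "0 < L" and T: "0 < T"
  using no_flux_law.L[OF law1] no_flux_law.T[OF law1] .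

lemma a: "0 < a" "a < 1" and \<kappa>: "0 < \<kappa>"
  and f2_lower: "\<And>s. 0 < s \<Longrightarrow> min (s powr a) s / \<kappa> \<le> s\<^sup>2 * f2 s"
  and continuous_on_f2: "continuous_on {0<..} f2"
  using pressure unfolding pressure_bounds_def by auto

lemma \<beta>: "a \<le> \<beta>" "\<beta> < 1" "1 < a + \<beta>" "0 < \<beta>"
  using entropy_exponent_bounds[OF a] by auto

lemma l: "0 \<le> l"
  using bound_V1'[of 0] L by (auto intro: order_trans)

lemma f2_pos: "0 < s \<Longrightarrow> 0 < f2 s"
  using diffusivity_pos[OF a \<kappa> order_refl a(2)] f2_lower by blast

lemma continuous_on_sigma: "continuous_on ({0..T}\<times>{0..L}) (\<lambda>(t,x). \<rho>1 t x + \<rho>2 t x)"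
  and continuous_on_sigma_x: "continuous_on ({0..T}\<times>{0..L}) (\<lambda>(t,x). \<rho>1x t x + \<rho>2x t x)"
  using no_flux_law.cont_u[OF law1] no_flux_law.cont_u[OF law2]
    no_flux_law.cont_ux[OF law1] no_flux_law.cont_ux[OF law2]
  by (auto intro: continuous_on_case_prod_add)

lemma sigma_has_derivative:
  "t \<in> {0..T} \<Longrightarrow> x \<in> {0..L} \<Longrightarrow>
    ((\<lambda>x. \<rho>1 t x + \<rho>2 t x) has_real_derivative \<rho>1x t x + \<rho>2x t x) (at x within {0..L})"
  using no_flux_law.deriv_x[OF law1] no_flux_law.deriv_x[OF law2] by (auto intro: DERIV_add)

lemma continuous_on_f2_sigma: "continuous_on ({0..T}\<times>{0..L}) (\<lambda>(t,x). f2 (\<rho>1 t x + \<rho>2 t x))"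
  by (rule continuous_on_case_prod_compose[OF continuous_on_f2 continuous_on_sigma]) (use pos in auto)

lemma nonneg1: "t \<in> {0..T} \<Longrightarrow> x \<in> {0..L} \<Longrightarrow> 0 \<le> \<rho>1 t x"
  by (rule nonneg_if_no_flux_drift_diffusion[OF law1, where b="\<lambda>t x. f2 (\<rho>1 t x + \<rho>2 t x) * (\<rho>1x t x + \<rho>2x t x) + V1' x",
        OF refl _ \<eta> init1])
    (intro continuous_on_case_prod_add continuous_on_case_prod_mult continuous_on_f2_sigma
       continuous_on_sigma_x continuous_on_case_prod_snd cont_V1')

lemma nonneg2: "t \<in> {0..T} \<Longrightarrow> x \<in> {0..L} \<Longrightarrow> 0 \<le> \<rho>2 t x"
  by (rule nonneg_if_no_flux_drift_diffusion[OF law2, where b="\<lambda>t x. f2 (\<rho>1 t x + \<rho>2 t x) * (\<rho>1x t x + \<rho>2x t x) + V2' x",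
        OF refl _ \<eta> init2])
    (intro continuous_on_case_prod_add continuous_on_case_prod_mult continuous_on_f2_sigma
       continuous_on_sigma_x continuous_on_case_prod_snd cont_V2')

lemmas sigma_law = no_flux_law_add[OF law1 law2]

lemma mass_conserved:
  assumes t: "t \<in> {0..T}"
  shows "integral {0..L} (\<lambda>x. \<rho>1 t x + \<rho>2 t x) = 2"
proof -
  interpret mass: no_flux_functional L T "\<lambda>t x. \<rho>1 t x + \<rho>2 t x" "\<lambda>t x. \<rho>1x t x + \<rho>2x t x"
    "\<lambda>t x. \<rho>1t t x + \<rho>2t t x" "\<lambda>t x. flux1 t x + flux2 t x" UNIV "\<lambda>r. r" "\<lambda>r. 1" "\<lambda>r. 0"
    by (rule no_flux_functional.intro[OF sigma_law]) (unfold_locales, auto)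
  have "((\<lambda>s. 0) has_integral mass.functional t - mass.functional 0) {0..t}"
    using mass.functional_increment[of 0 t] t unfolding mass.production_def by simp
  then show ?thesis using mass0 unfolding mass.functional_def by (simp add: has_integral_iff)
qed

lemma has_integral_one_add_sigma:
  assumes t: "t \<in> {0..T}"
  shows "((\<lambda>x. 1 + (\<rho>1 t x + \<rho>2 t x)) has_integral L + 2) {0..L}"
proof -
  have "(\<lambda>x. \<rho>1 t x + \<rho>2 t x) integrable_on {0..L}"
    by (rule integrable_continuous_real, rule continuous_on_slice[OF continuous_on_sigma t])
  then have "((\<lambda>x. \<rho>1 t x + \<rho>2 t x) has_integral 2) {0..L}"
    using mass_conserved[OF t] by (simp add: has_integral_integral)
  from has_integral_add[OF has_integral_const_real[of 1 0 L] this] show ?thesis using L by simp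
qed

end

context two_species_solution
begin

definition dissipation_density :: "real \<Rightarrow> real \<Rightarrow> real" where
  "dissipation_density t x = (\<rho>1 t x + \<rho>2 t x) powr (\<beta> - 1) * f2 (\<rho>1 t x + \<rho>2 t x)
     * (\<rho>1x t x + \<rho>2x t x)\<^sup>2"

definition dissipation :: "real \<Rightarrow> real" where
  "dissipation t = integral {0..L} (dissipation_density t)"

lemma continuous_on_dissipation_density:
  "continuous_on ({0..T}\<times>{0..L}) (\<lambda>(t,x). dissipation_density t x)"
proof -
  have "continuous_on {0<..} (\<lambda>s::real. s powr (\<beta> - 1))" by (intro continuous_intros) auto
  then have "continuous_on ({0..T}\<times>{0..L}) (\<lambda>(t,x). (\<rho>1 t x + \<rho>2 t x) powr (\<beta> - 1))"
    by (rule continuous_on_case_prod_compose[OF _ continuous_on_sigma]) (use pos in auto)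
  then show ?thesis
    unfolding dissipation_density_def power2_eq_square
    by (intro continuous_on_case_prod_mult continuous_on_f2_sigma continuous_on_sigma_x)
qed

lemma has_integral_dissipation:
  "t \<in> {0..T} \<Longrightarrow> (dissipation_density t has_integral dissipation t) {0..L}"
  unfolding dissipation_def
  by (rule integrable_integral, rule integrable_continuous_real,
      rule continuous_on_slice[OF continuous_on_dissipation_density])

lemma dissipation_nonneg:
  assumes t: "t \<in> {0..T}"
  shows "0 \<le> dissipation t"
proof (rule has_integral_nonneg[OF has_integral_dissipation[OF t]])
  fix x assume "x \<in> {0..L}"
  then show "0 \<le> dissipation_density t x"
    unfolding dissipation_density_def using pos[OF t] f2_pos by (simp add: less_imp_le)
qed

lemma continuous_on_dissipation: "continuous_on {0..T} dissipation"
  unfolding dissipation_def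
  by (rule continuous_on_integral_slice[OF continuous_on_dissipation_density])

lemma continuous_on_one_add_sigma_powr:
  assumes t: "t \<in> {0..T}"
  shows "continuous_on {0..L} (\<lambda>y. (1 + (\<rho>1 t y + \<rho>2 t y)) powr r)"
proof (rule continuous_on_powr[OF _ continuous_on_const])
  show "continuous_on {0..L} (\<lambda>y. 1 + (\<rho>1 t y + \<rho>2 t y))"
    using continuous_on_add[OF continuous_on_const continuous_on_slice[OF continuous_on_sigma t]] .
  show "\<forall>y\<in>{0..L}. 1 + (\<rho>1 t y + \<rho>2 t y) \<noteq> 0" using pos[OF t] by fastforce
qed

text \<open>The integrand is \<open>|\<partial>\<^sub>x (1+\<sigma>)\<^bsup>e\<^esup>|\<close>; it is split by the AM-GM inequality with weight \<open>\<lambda>\<close>.\<close>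

lemma integral_variation_root_le:
  assumes t: "t \<in> {0..T}" and lam: "0 < lam"
  defines "e \<equiv> (a + \<beta>) / 2"
  shows "integral {0..L} (\<lambda>y. \<bar>e * (1 + (\<rho>1 t y + \<rho>2 t y)) powr (e - 1) * (\<rho>1x t y + \<rho>2x t y)\<bar>)
    \<le> (e * \<kappa> / (2 * lam)) * dissipation t + (e * lam / 2) * (L + 2)"
proof -
  have e: "0 < e" unfolding e_def using a \<beta> by auto
  have bound: "((\<lambda>y. (e * \<kappa> / (2 * lam)) * dissipation_density t y + (e * lam / 2) * (1 + (\<rho>1 t y + \<rho>2 t y)))
      has_integral (e * \<kappa> / (2 * lam)) * dissipation t + (e * lam / 2) * (L + 2)) {0..L}"
    by (intro has_integral_add has_integral_mult_right has_integral_dissipation[OF t]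
        has_integral_one_add_sigma[OF t])
  have "integral {0..L} (\<lambda>y. \<bar>e * (1 + (\<rho>1 t y + \<rho>2 t y)) powr (e - 1) * (\<rho>1x t y + \<rho>2x t y)\<bar>)
    \<le> integral {0..L} (\<lambda>y. (e * \<kappa> / (2 * lam)) * dissipation_density t y
         + (e * lam / 2) * (1 + (\<rho>1 t y + \<rho>2 t y)))"
  proof (rule integral_le)
    show "(\<lambda>y. \<bar>e * (1 + (\<rho>1 t y + \<rho>2 t y)) powr (e - 1) * (\<rho>1x t y + \<rho>2x t y)\<bar>) integrable_on {0..L}"
      using continuous_on_one_add_sigma_powr[OF t] continuous_on_slice[OF continuous_on_sigma_x t]
      by (intro integrable_continuous_real continuous_on_rabs continuous_on_mult continuous_on_const) auto
    show "(\<lambda>y. (e * \<kappa> / (2 * lam)) * dissipation_density t y + (e * lam / 2) * (1 + (\<rho>1 t y + \<rho>2 t y)))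
      integrable_on {0..L}" using bound by blast
    fix y assume y: "y \<in> {0..L}"
    define s p where "s = \<rho>1 t y + \<rho>2 t y" and "p = \<rho>1x t y + \<rho>2x t y"
    have s: "0 < s" unfolding s_def by (rule pos[OF t y])
    have "\<bar>e * (1 + s) powr (e - 1) * p\<bar> = e * ((1 + s) powr ((a + \<beta>) / 2 - 1) * \<bar>p\<bar>)"
      using e by (simp add: abs_mult e_def)
    also have "\<dots> \<le> e * ((\<kappa> * (s powr (\<beta> - 1) * f2 s * p\<^sup>2) / lam + lam * (1 + s)) / 2)"
      using weighted_abs_le_dissipation_density[OF a \<kappa> \<beta>(1,2) s f2_lower[OF s] lam] e
      by (intro mult_left_mono) auto
    finally show "\<bar>e * (1 + s) powr (e - 1) * p\<bar> \<le> (e * \<kappa> / (2 * lam)) * dissipation_density t y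
         + (e * lam / 2) * (1 + s)"
      unfolding dissipation_density_def s_def[symmetric] p_def[symmetric] using lam
      by (simp add: field_simps)
  qed
  then show ?thesis using integral_unique[OF bound] by simp
qed

lemma one_add_sigma_powr_has_derivative:
  assumes t: "t \<in> {0..T}" and y: "y \<in> {0..L}"
  shows "((\<lambda>y. (1 + (\<rho>1 t y + \<rho>2 t y)) powr e) has_real_derivative
    e * (1 + (\<rho>1 t y + \<rho>2 t y)) powr (e - 1) * (\<rho>1x t y + \<rho>2x t y)) (at y within {0..L})"
proof -
  have "((\<lambda>z. z powr e) has_real_derivative e * (1 + (\<rho>1 t y + \<rho>2 t y)) powr (e - 1))
      (at (1 + (\<rho>1 t y + \<rho>2 t y)))"
    by (rule has_real_derivative_powr) (use pos[OF t y] in simp)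
  from DERIV_chain2[OF this DERIV_add[OF DERIV_const sigma_has_derivative[OF t y]]]
  show ?thesis by simp
qed

lemma integral_one_add_sigma_powr_le:
  assumes t: "t \<in> {0..T}" and e: "0 < e" "e \<le> 1"
  shows "integral {0..L} (\<lambda>y. (1 + (\<rho>1 t y + \<rho>2 t y)) powr e) \<le> L + 2"
proof -
  have "integral {0..L} (\<lambda>y. (1 + (\<rho>1 t y + \<rho>2 t y)) powr e)
      \<le> integral {0..L} (\<lambda>y. 1 + (\<rho>1 t y + \<rho>2 t y))"
  proof (rule integral_le)
    fix y assume y: "y \<in> {0..L}"
    show "(1 + (\<rho>1 t y + \<rho>2 t y)) powr e \<le> 1 + (\<rho>1 t y + \<rho>2 t y)"
      using powr_mono[of e 1 "1 + (\<rho>1 t y + \<rho>2 t y)"] e pos[OF t y] by simp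
  qed (use integrable_continuous_real[OF continuous_on_one_add_sigma_powr[OF t]]
         has_integral_one_add_sigma[OF t] in blast)+
  then show ?thesis using integral_unique[OF has_integral_one_add_sigma[OF t]] by simp
qed

text \<open>The weight \<open>\<lambda> = \<surd>(D+1)\<close> balances the two terms of the previous lemma.\<close>

lemma one_add_sigma_powr_le:
  assumes t: "t \<in> {0..T}" and x: "x \<in> {0..L}"
  shows "(1 + (\<rho>1 t x + \<rho>2 t x)) powr (a + \<beta>) \<le> (sobolev_const L \<kappa>)\<^sup>2 * (dissipation t + 1)"
proof -
  define e where "e = (a + \<beta>) / 2"
  have e: "0 < e" "e \<le> 1" using \<beta> a unfolding e_def by auto
  define w where "w y = (1 + (\<rho>1 t y + \<rho>2 t y)) powr e" for y
  define w' where "w' y = e * (1 + (\<rho>1 t y + \<rho>2 t y)) powr (e - 1) * (\<rho>1x t y + \<rho>2x t y)" for y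
  define lam where "lam = sqrt (dissipation t + 1)"
  have D: "0 \<le> dissipation t" by (rule dissipation_nonneg[OF t])
  have lam: "1 \<le> lam" "lam\<^sup>2 = dissipation t + 1" unfolding lam_def using D by auto
  have dw: "(w has_real_derivative w' y) (at y within {0..L})" if "y \<in> {0..L}" for y
    unfolding w_def w'_def by (rule one_add_sigma_powr_has_derivative[OF t that])
  have cw: "continuous_on {0..L} w" using DERIV_continuous_on[OF dw] .
  have cw': "continuous_on {0..L} w'"
    unfolding w'_def using continuous_on_one_add_sigma_powr[OF t] continuous_on_slice[OF continuous_on_sigma_x t]
    by (intro continuous_on_mult continuous_on_const) auto
  have mean: "integral {0..L} w \<le> L + 2"
    unfolding w_def by (rule integral_one_add_sigma_powr_le[OF t e])
  have "L * integral {0..L} (\<lambda>y. \<bar>w' y\<bar>)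
      \<le> L * ((e * \<kappa> / (2 * lam)) * dissipation t + (e * lam / 2) * (L + 2))"
    using integral_variation_root_le[OF t, of lam] lam L unfolding w'_def e_def
    by (intro mult_left_mono) auto
  then have "L * w x \<le> (L + 2) + L * ((e * \<kappa> / (2 * lam)) * dissipation t + (e * lam / 2) * (L + 2))"
    using mult_le_integral_add_variation[OF L cw cw' dw x] mean by linarith
  then have "w x \<le> (L + 2) / L + ((e * \<kappa> / (2 * lam)) * dissipation t + (e * lam / 2) * (L + 2))"
    using L by (simp add: field_simps)
  also have "\<dots> = (L + 2) / L + (e * \<kappa> / 2) * (dissipation t / lam) + (e / 2) * (L + 2) * lam"
    by simp
  also have "\<dots> \<le> (L + 2) / L * lam + (\<kappa> / 2) * lam + (1 / 2) * (L + 2) * lam"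
  proof -
    have "dissipation t / lam \<le> lam" using lam by (simp add: divide_le_eq power2_eq_square)
    then have "(e * \<kappa> / 2) * (dissipation t / lam) \<le> (\<kappa> / 2) * lam"
      using e \<kappa> lam D by (intro mult_mono) auto
    moreover have "(L + 2) / L * 1 \<le> (L + 2) / L * lam" using lam L by (intro mult_left_mono) auto
    moreover have "(e / 2) * (L + 2) * lam \<le> (1 / 2) * (L + 2) * lam"
      using e L lam by (intro mult_right_mono) auto
    ultimately show ?thesis by linarith
  qed
  also have "\<dots> = sobolev_const L \<kappa> * lam"
    unfolding sobolev_const_def by (simp add: algebra_simps)
  finally have "(w x)\<^sup>2 \<le> (sobolev_const L \<kappa> * lam)\<^sup>2"
    by (rule power_mono) (simp add: w_def)
  moreover have "(w x)\<^sup>2 = (1 + (\<rho>1 t x + \<rho>2 t x)) powr (a + \<beta>)"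
    unfolding w_def e_def by (simp add: power2_eq_square powr_add[symmetric])
  ultimately show ?thesis using lam by (simp add: power_mult_distrib)
qed

end

context two_species_solution
begin

lemma sigma_entropy_functional:
  "no_flux_functional L T (\<lambda>t x. \<rho>1 t x + \<rho>2 t x) (\<lambda>t x. \<rho>1x t x + \<rho>2x t x)
     (\<lambda>t x. \<rho>1t t x + \<rho>2t t x) (\<lambda>t x. flux1 t x + flux2 t x) {0<..}
     (\<lambda>s. - (s powr \<beta>) / (\<beta> * (1 - \<beta>))) (\<lambda>s. - (s powr (\<beta> - 1)) / (1 - \<beta>)) (\<lambda>s. s powr (\<beta> - 2))"
proof (rule no_flux_functional.intro[OF sigma_law], unfold_locales)
  fix y :: real assume "y \<in> {0<..}"
  then have y: "0 < y" by simp
  have \<beta>0: "\<beta> \<noteq> 0" "1 - \<beta> \<noteq> 0" using \<beta> by auto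
  have "((\<lambda>s. - (s powr \<beta>) / (\<beta> * (1 - \<beta>))) has_real_derivative
      - (\<beta> * y powr (\<beta> - 1)) / (\<beta> * (1 - \<beta>))) (at y)"
    by (rule DERIV_cdivide[OF DERIV_minus[OF has_real_derivative_powr[OF y]]])
  then show "((\<lambda>s. - (s powr \<beta>) / (\<beta> * (1 - \<beta>))) has_real_derivative
      - (y powr (\<beta> - 1)) / (1 - \<beta>)) (at y)"
    using \<beta>0 by simp
  have "((\<lambda>s. - (s powr (\<beta> - 1)) / (1 - \<beta>)) has_real_derivative - ((\<beta> - 1) * y powr (\<beta> - 1 - 1)) / (1 - \<beta>)) (at y)"
    by (rule DERIV_cdivide[OF DERIV_minus[OF has_real_derivative_powr[OF y]]])
  moreover have "- ((\<beta> - 1) * y powr (\<beta> - 1 - 1)) / (1 - \<beta>) = y powr (\<beta> - 2)"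
    using \<beta>0 by (simp add: field_simps)
  ultimately show "((\<lambda>s. - (s powr (\<beta> - 1)) / (1 - \<beta>)) has_real_derivative y powr (\<beta> - 2)) (at y)"
    by simp
qed (use pos in \<open>auto intro: continuous_intros\<close>)

end

sublocale two_species_solution \<subseteq> entropy: no_flux_functional L T "\<lambda>t x. \<rho>1 t x + \<rho>2 t x"
  "\<lambda>t x. \<rho>1x t x + \<rho>2x t x" "\<lambda>t x. \<rho>1t t x + \<rho>2t t x" "\<lambda>t x. flux1 t x + flux2 t x" "{0<..}"
  "\<lambda>s. - (s powr \<beta>) / (\<beta> * (1 - \<beta>))" "\<lambda>s. - (s powr (\<beta> - 1)) / (1 - \<beta>)" "\<lambda>s. s powr (\<beta> - 2)"
  by (rule sigma_entropy_functional)

context two_species_solution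
begin

abbreviation "\<gamma> \<equiv> absorption_exponent a"

lemma \<gamma>: "0 \<le> \<gamma>" "\<gamma> < 1"
  unfolding absorption_exponent_def using \<beta> a by (auto simp: divide_less_eq)

lemma one_add_sigma_powr_entropy_le:
  assumes t: "t \<in> {0..T}" and x: "x \<in> {0..L}"
  shows "(1 + (\<rho>1 t x + \<rho>2 t x)) powr (\<beta> + 1 - a)
    \<le> (1 + (\<rho>1 t x + \<rho>2 t x)) * (((sobolev_const L \<kappa>)\<^sup>2) powr \<gamma> * (dissipation t + 1) powr \<gamma>)"
proof -
  define s where "s = \<rho>1 t x + \<rho>2 t x"
  have s: "0 < s" unfolding s_def by (rule pos[OF t x])
  have "(a + \<beta>) * \<gamma> = \<beta> - a"
    unfolding absorption_exponent_def using \<beta> a by (simp add: field_simps)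
  then have "(1 + s) powr (\<beta> + 1 - a) = (1 + s) powr (1 + (a + \<beta>) * \<gamma>)"
    by (simp only:) (simp add: algebra_simps)
  also have "\<dots> = (1 + s) powr 1 * (1 + s) powr ((a + \<beta>) * \<gamma>)" by (rule powr_add)
  also have "\<dots> = (1 + s) * ((1 + s) powr (a + \<beta>)) powr \<gamma>"
    using s by (simp add: powr_powr)
  also have "\<dots> \<le> (1 + s) * ((sobolev_const L \<kappa>)\<^sup>2 * (dissipation t + 1)) powr \<gamma>"
    using one_add_sigma_powr_le[OF t x] s \<gamma>
    by (intro mult_left_mono powr_mono2) (auto simp: s_def)
  finally show ?thesis
    using dissipation_nonneg[OF t] by (simp add: powr_mult s_def)
qed

lemma entropy_production_density_ge:
  assumes t: "t \<in> {0..T}" and y: "y \<in> {0..L}"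
  defines "W \<equiv> ((sobolev_const L \<kappa>)\<^sup>2) powr \<gamma> * (dissipation t + 1) powr \<gamma>"
  shows "(\<rho>1 t y + \<rho>2 t y) powr (\<beta> - 2) * (\<rho>1x t y + \<rho>2x t y) * (flux1 t y + flux2 t y)
    \<ge> dissipation_density t y / 2 - (l\<^sup>2 * \<kappa> / 2) * W * (1 + (\<rho>1 t y + \<rho>2 t y))"
proof -
  let ?s = "\<rho>1 t y + \<rho>2 t y" and ?p = "\<rho>1x t y + \<rho>2x t y"
    and ?P = "\<rho>1 t y * V1' y + \<rho>2 t y * V2' y"
  have s: "0 < ?s" by (rule pos[OF t y])
  have flux: "flux1 t y + flux2 t y = \<eta> * ?p + ?s * f2 ?s * ?p + ?P"
    by (simp add: algebra_simps)
  have "\<bar>\<rho>1 t y * V1' y\<bar> \<le> \<rho>1 t y * l" "\<bar>\<rho>2 t y * V2' y\<bar> \<le> \<rho>2 t y * l"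
    using nonneg1[OF t y] nonneg2[OF t y] bound_V1'[OF y] bound_V2'[OF y]
    by (simp_all add: abs_mult mult_left_mono)
  then have "\<bar>?P\<bar> \<le> l * ?s" by (simp add: algebra_simps)
  from entropy_flux_density_ge[OF a \<kappa> \<beta>(1,2) s f2_lower[OF s] less_imp_le[OF \<eta>] this, of ?p]
  have "?s powr (\<beta> - 2) * ?p * (flux1 t y + flux2 t y)
      \<ge> dissipation_density t y / 2 - (l\<^sup>2 * \<kappa> / 2) * (1 + ?s) powr (\<beta> + 1 - a)"
    unfolding flux dissipation_density_def by simp
  moreover have "(l\<^sup>2 * \<kappa> / 2) * (1 + ?s) powr (\<beta> + 1 - a) \<le> (l\<^sup>2 * \<kappa> / 2) * ((1 + ?s) * W)"
    using one_add_sigma_powr_entropy_le[OF t y] \<kappa> unfolding W_def by (intro mult_left_mono) auto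
  moreover have "(l\<^sup>2 * \<kappa> / 2) * ((1 + ?s) * W) = (l\<^sup>2 * \<kappa> / 2) * W * (1 + ?s)"
    by (simp only: mult_ac)
  ultimately show ?thesis by linarith
qed

text \<open>Integrating the previous bound in space, the potential term is sublinear in the
  dissipation and is absorbed.\<close>

lemma entropy_production_ge:
  assumes t: "t \<in> {0..T}"
  shows "dissipation t / 4 - entropy_rate_const L a \<kappa> l \<le> entropy.production t"
proof -
  define K0 where "K0 = potential_const L a \<kappa> l"
  define M where "M = (l\<^sup>2 * \<kappa> / 2) * (((sobolev_const L \<kappa>)\<^sup>2) powr \<gamma> * (dissipation t + 1) powr \<gamma>)"
  have D: "0 \<le> dissipation t" by (rule dissipation_nonneg[OF t])
  have production: "((\<lambda>y. (\<rho>1 t y + \<rho>2 t y) powr (\<beta> - 2) * (\<rho>1x t y + \<rho>2x t y) * (flux1 t y + flux2 t y))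
      has_integral entropy.production t) {0..L}"
    unfolding entropy.production_def
    by (rule integrable_integral, rule integrable_continuous_real)
      (use continuous_on_slice[OF entropy.continuous_on_production_density t] in simp)
  have lower: "((\<lambda>y. dissipation_density t y / 2 - M * (1 + (\<rho>1 t y + \<rho>2 t y)))
      has_integral dissipation t / 2 - M * (L + 2)) {0..L}"
    using has_integral_diff[OF has_integral_mult_left[OF has_integral_dissipation[OF t], of "1/2"]
        has_integral_mult_right[OF has_integral_one_add_sigma[OF t], of M]] by simp
  have "dissipation t / 2 - K0 * (dissipation t + 1) powr \<gamma> \<le> entropy.production t"
    using has_integral_le[OF lower production] entropy_production_density_ge[OF t]
    unfolding M_def K0_def potential_const_def by (simp add: algebra_simps)
  moreover have "K0 * (dissipation t + 1) powr \<gamma> \<le> (dissipation t + 1) / 4 + K0 * (1 + (4 * K0) powr (1 / (1 - \<gamma>)))"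
    by (rule absorb_sublinear_power[OF _ \<gamma>]) (use D l \<kappa> L in \<open>auto simp: K0_def potential_const_def\<close>)
  ultimately show ?thesis unfolding entropy_rate_const_def K0_def[symmetric] by (simp add: field_simps)
qed

end

context two_species_solution
begin

lemma entropy_bounds:
  "entropy.functional 0 \<le> 0" "- ((L + 2) / (\<beta> * (1 - \<beta>))) \<le> entropy.functional T"
proof -
  have \<beta>\<beta>: "0 < \<beta> * (1 - \<beta>)" using \<beta> by simp
  have int: "(\<lambda>x. - ((\<rho>1 t x + \<rho>2 t x) powr \<beta>) / (\<beta> * (1 - \<beta>))) integrable_on {0..L}"
    if "t \<in> {0..T}" for t
    by (rule integrable_continuous_real, rule continuous_on_slice[OF entropy.continuous_on_\<Phi>_u that])
  have "entropy.functional 0 \<le> integral {0..L} (\<lambda>x. 0::real)"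
    unfolding entropy.functional_def using T \<beta>\<beta> int[of 0] by (intro integral_le) auto
  then show "entropy.functional 0 \<le> 0" by simp
  have T': "T \<in> {0..T}" using T by simp
  have lower: "((\<lambda>x. - (1 + (\<rho>1 T x + \<rho>2 T x)) / (\<beta> * (1 - \<beta>))) has_integral
      - (L + 2) / (\<beta> * (1 - \<beta>))) {0..L}"
    using has_integral_mult_left[OF has_integral_neg[OF has_integral_one_add_sigma[OF T']],
        of "1 / (\<beta> * (1 - \<beta>))"] by simp
  have "- (L + 2) / (\<beta> * (1 - \<beta>)) \<le> entropy.functional T"
    unfolding entropy.functional_def integral_unique[OF lower, symmetric]
  proof (rule integral_le[OF _ int[OF T']])
    fix x assume x: "x \<in> {0..L}"
    have s: "0 < \<rho>1 T x + \<rho>2 T x" by (rule pos[OF T' x])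
    have "(\<rho>1 T x + \<rho>2 T x) powr \<beta> \<le> (1 + (\<rho>1 T x + \<rho>2 T x)) powr \<beta>"
      by (rule powr_mono2) (use s \<beta> in auto)
    also have "\<dots> \<le> (1 + (\<rho>1 T x + \<rho>2 T x)) powr 1" by (rule powr_mono) (use s \<beta> in auto)
    finally show "- (1 + (\<rho>1 T x + \<rho>2 T x)) / (\<beta> * (1 - \<beta>))
        \<le> - ((\<rho>1 T x + \<rho>2 T x) powr \<beta>) / (\<beta> * (1 - \<beta>))"
      using s \<beta>\<beta> by (intro divide_right_mono) auto
  qed (use lower in blast)
  then show "- ((L + 2) / (\<beta> * (1 - \<beta>))) \<le> entropy.functional T" by (simp only: minus_divide_left)
qed

lemma integral_dissipation_le: "integral {0..T} dissipation \<le> dissipation_bound L T a \<kappa> l"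
proof -
  define K1 where "K1 = entropy_rate_const L a \<kappa> l"
  have "(entropy.production has_integral entropy.functional 0 - entropy.functional T) {0..T}"
    using has_integral_neg[OF entropy.functional_increment[of 0 T]] T by simp
  from has_integral_add[OF has_integral_mult_right[OF this, of 4] has_integral_const_real[of "4 * K1" 0 T]]
  have rhs: "((\<lambda>t. 4 * entropy.production t + 4 * K1) has_integral
      4 * (entropy.functional 0 - entropy.functional T) + 4 * K1 * T) {0..T}"
    using T by (simp add: algebra_simps)
  have "integral {0..T} dissipation \<le> 4 * (entropy.functional 0 - entropy.functional T) + 4 * K1 * T"
    (is "_ \<le> ?bound")
    unfolding integral_unique[OF rhs, symmetric]
  proof (rule integral_le)
    show "dissipation integrable_on {0..T}" by (rule integrable_continuous_real[OF continuous_on_dissipation])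
    show "(\<lambda>t. 4 * entropy.production t + 4 * K1) integrable_on {0..T}" using rhs by blast
    fix t assume "t \<in> {0..T}"
    then show "dissipation t \<le> 4 * entropy.production t + 4 * K1"
      using entropy_production_ge unfolding K1_def by fastforce
  qed
  also have "?bound \<le> 4 * ((L + 2) / (\<beta> * (1 - \<beta>))) + 4 * K1 * T"
  proof -
    have "entropy.functional 0 - entropy.functional T \<le> (L + 2) / (\<beta> * (1 - \<beta>))"
      using entropy_bounds by linarith
    from mult_left_mono[OF this, of 4] show ?thesis by linarith
  qed
  finally show ?thesis unfolding dissipation_bound_def K1_def by simp
qed

lemma slice_integral_gradient_powr_le:
  assumes t: "t \<in> {0..T}"
  defines "C \<equiv> sobolev_const L \<kappa>"
  shows "integral {0..L} (\<lambda>x. \<bar>\<rho>1x t x + \<rho>2x t x\<bar> powr ((1 + a + \<beta>) / 2))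
    \<le> (\<kappa> + C\<^sup>2 * (L + 2)) * dissipation t + C\<^sup>2 * (L + 2)"
proof -
  have bound: "((\<lambda>x. \<kappa> * dissipation_density t x + (C\<^sup>2 * (dissipation t + 1)) * (1 + (\<rho>1 t x + \<rho>2 t x)))
      has_integral \<kappa> * dissipation t + (C\<^sup>2 * (dissipation t + 1)) * (L + 2)) {0..L}"
    by (intro has_integral_add has_integral_mult_right has_integral_dissipation[OF t]
        has_integral_one_add_sigma[OF t])
  have "integral {0..L} (\<lambda>x. \<bar>\<rho>1x t x + \<rho>2x t x\<bar> powr ((1 + a + \<beta>) / 2))
    \<le> \<kappa> * dissipation t + (C\<^sup>2 * (dissipation t + 1)) * (L + 2)"
    unfolding integral_unique[OF bound, symmetric]
  proof (rule integral_le)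
    show "(\<lambda>x. \<bar>\<rho>1x t x + \<rho>2x t x\<bar> powr ((1 + a + \<beta>) / 2)) integrable_on {0..L}"
      using continuous_on_slice[OF continuous_on_sigma_x t] a \<beta>
      by (intro integrable_continuous_real continuous_on_powr' continuous_on_rabs continuous_on_const) auto
    show "(\<lambda>x. \<kappa> * dissipation_density t x + C\<^sup>2 * (dissipation t + 1) * (1 + (\<rho>1 t x + \<rho>2 t x)))
      integrable_on {0..L}" using bound by blast
    fix x assume x: "x \<in> {0..L}"
    let ?s = "\<rho>1 t x + \<rho>2 t x"
    have s: "0 < ?s" by (rule pos[OF t x])
    have "(1 + ?s) powr (1 + a + \<beta>) = (1 + ?s) powr (1 + (a + \<beta>))" by (simp add: add.assoc)
    also have "\<dots> = (1 + ?s) powr 1 * (1 + ?s) powr (a + \<beta>)" by (rule powr_add)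
    also have "\<dots> \<le> (1 + ?s) * (C\<^sup>2 * (dissipation t + 1))"
      using mult_left_mono[OF one_add_sigma_powr_le[OF t x], of "1 + ?s"] s unfolding C_def by simp
    finally show "\<bar>\<rho>1x t x + \<rho>2x t x\<bar> powr ((1 + a + \<beta>) / 2)
        \<le> \<kappa> * dissipation_density t x + C\<^sup>2 * (dissipation t + 1) * (1 + ?s)"
      using abs_powr_le_dissipation_density[OF a \<kappa> \<beta>(1,2) s f2_lower[OF s] \<beta>(3), of "\<rho>1x t x + \<rho>2x t x"]
      unfolding dissipation_density_def by (simp add: algebra_simps)
  qed
  then show ?thesis by (simp add: algebra_simps)
qed

lemma integral_gradient_powr_le:
  "integral ({0..T}\<times>{0..L}) (\<lambda>(t,x). \<bar>\<rho>1x t x + \<rho>2x t x\<bar> powr ((1 + a + \<beta>) / 2))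
    \<le> gradient_bound L T a \<kappa> l"
proof -
  define C where "C = sobolev_const L \<kappa>"
  define A where "A = \<kappa> + C\<^sup>2 * (L + 2)"
  define Q where "Q = (\<lambda>(t,x). \<bar>\<rho>1x t x + \<rho>2x t x\<bar> powr ((1 + a + \<beta>) / 2))"
  have cQ: "continuous_on ({0..T}\<times>{0..L}) Q"
    unfolding Q_def using continuous_on_sigma_x a \<beta>
    by (intro continuous_on_case_prod_compose[of UNIV "\<lambda>p. \<bar>p\<bar> powr ((1 + a + \<beta>) / 2)"]
        continuous_on_powr' continuous_on_rabs continuous_on_id continuous_on_const) auto
  have rhs: "((\<lambda>t. A * dissipation t + C\<^sup>2 * (L + 2)) has_integral
      A * integral {0..T} dissipation + C\<^sup>2 * (L + 2) * T) {0..T}"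
    using has_integral_add[OF has_integral_mult_right[OF integrable_integral[OF
          integrable_continuous_real[OF continuous_on_dissipation]], of A]
        has_integral_const_real[of "C\<^sup>2 * (L + 2)" 0 T]] T
    by (simp add: algebra_simps)
  have "integral ({0..T}\<times>{0..L}) Q = integral {0..T} (\<lambda>t. integral {0..L} (\<lambda>x. Q (t, x)))"
    by (rule integral_rectangle_iterated[OF cQ])
  also have "\<dots> \<le> A * integral {0..T} dissipation + C\<^sup>2 * (L + 2) * T"
    unfolding integral_unique[OF rhs, symmetric]
  proof (rule integral_le)
    show "(\<lambda>t. integral {0..L} (\<lambda>x. Q (t, x))) integrable_on {0..T}"
      using cQ by (intro integrable_continuous_real continuous_on_integral_slice) (simp add: case_prod_beta')
    show "(\<lambda>t. A * dissipation t + C\<^sup>2 * (L + 2)) integrable_on {0..T}" using rhs by blast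
  qed (simp add: Q_def A_def C_def slice_integral_gradient_powr_le)
  also have "\<dots> \<le> A * dissipation_bound L T a \<kappa> l + C\<^sup>2 * (L + 2) * T"
    using integral_dissipation_le \<kappa> L unfolding A_def by (simp add: mult_left_mono)
  finally show ?thesis unfolding Q_def A_def C_def gradient_bound_def .
qed

end

lemma flux_eq_expanded:
  assumes L: "0 < L" and f: "pressure_bounds a \<kappa> f" and V: "potential_ok L V"
    and d1: "(r1 has_real_derivative r1') (at y within {0..L})"
    and d2: "(r2 has_real_derivative r2') (at y within {0..L})"
    and y: "y \<in> {0..L}" and pos: "0 < r1 y + r2 y"
  shows "flux L f \<eta> V r (\<lambda>x. r1 x + r2 x) y =
    \<eta> * dxL L r y + r y * ((deriv ^^ 2) f (r1 y + r2 y) * (r1' + r2') + dxL L V y)"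
proof -
  have "(deriv f has_real_derivative (deriv ^^ 2) f (r1 y + r2 y)) (at (r1 y + r2 y))"
    using f pos unfolding pressure_bounds_def by blast
  from DERIV_add[OF DERIV_chain2[OF this DERIV_add[OF d1 d2]] potential_deriv_props(1)[OF L V y]]
  show ?thesis unfolding flux_def by (simp add: dxL_eqI[OF L y])
qed

lemma no_flux_law_if_classical:
  assumes L: "0 < L" and T: "0 < T" and f: "pressure_bounds a \<kappa> f" and V: "potential_ok L V"
    and reg: "sol_regular L T \<rho>" and reg1: "sol_regular L T \<rho>1" and reg2: "sol_regular L T \<rho>2"
    and pos: "\<And>t x. t \<in> {0..T} \<Longrightarrow> x \<in> {0..L} \<Longrightarrow> 0 < \<rho>1 t x + \<rho>2 t x"
    and pde: "\<And>t x. t \<in> {0<..<T} \<Longrightarrow> x \<in> {0<..<L} \<Longrightarrow>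
       flux L f \<eta> V (\<rho> t) (\<lambda>x. \<rho>1 t x + \<rho>2 t x) differentiable (at x) \<and>
       dtT T \<rho> t x = dxL L (flux L f \<eta> V (\<rho> t) (\<lambda>x. \<rho>1 t x + \<rho>2 t x)) x"
    and boundary: "\<And>t. t \<in> {0<..<T} \<Longrightarrow>
       flux L f \<eta> V (\<rho> t) (\<lambda>x. \<rho>1 t x + \<rho>2 t x) 0 = 0 \<and>
       flux L f \<eta> V (\<rho> t) (\<lambda>x. \<rho>1 t x + \<rho>2 t x) L = 0"
  shows "no_flux_law L T \<rho> (\<lambda>t. dxL L (\<rho> t)) (dtT T \<rho>) (\<lambda>t x. \<eta> * dxL L (\<rho> t) x + \<rho> t x *
    ((deriv ^^ 2) f (\<rho>1 t x + \<rho>2 t x) * (dxL L (\<rho>1 t) x + dxL L (\<rho>2 t) x) + dxL L V x))"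
proof -
  note R = sol_regular_props[OF L T reg] and R1 = sol_regular_props[OF L T reg1]
    and R2 = sol_regular_props[OF L T reg2]
  have expand: "flux L f \<eta> V (\<rho> t) (\<lambda>x. \<rho>1 t x + \<rho>2 t x) x = \<eta> * dxL L (\<rho> t) x + \<rho> t x *
      ((deriv ^^ 2) f (\<rho>1 t x + \<rho>2 t x) * (dxL L (\<rho>1 t) x + dxL L (\<rho>2 t) x) + dxL L V x)"
    if "t \<in> {0..T}" "x \<in> {0..L}" for t x
    by (rule flux_eq_expanded[OF L f V R1(4) R2(4)]) (use that pos in auto)
  have cont_f2: "continuous_on ({0..T}\<times>{0..L}) (\<lambda>(t,x). (deriv ^^ 2) f (\<rho>1 t x + \<rho>2 t x))"
    using f pos unfolding pressure_bounds_def
    by (intro continuous_on_case_prod_compose[OF _ continuous_on_case_prod_add[OF R1(1) R2(1)]]) auto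
  show ?thesis
  proof (unfold_locales)
    show "continuous_on ({0..T}\<times>{0..L}) (\<lambda>(t,x). \<eta> * dxL L (\<rho> t) x + \<rho> t x *
      ((deriv ^^ 2) f (\<rho>1 t x + \<rho>2 t x) * (dxL L (\<rho>1 t) x + dxL L (\<rho>2 t) x) + dxL L V x))"
      by (intro continuous_on_case_prod_add continuous_on_case_prod_mult continuous_on_case_prod_snd
          R(1,2) R1(2) R2(2) cont_f2 continuous_on_const potential_deriv_props(2)[OF L V])
  next
    fix t x assume t: "t \<in> {0<..<T}" and x: "x \<in> {0<..<L}"
    show "((\<lambda>x. \<eta> * dxL L (\<rho> t) x + \<rho> t x * ((deriv ^^ 2) f (\<rho>1 t x + \<rho>2 t x) *
        (dxL L (\<rho>1 t) x + dxL L (\<rho>2 t) x) + dxL L V x)) has_real_derivative dtT T \<rho> t x) (at x)"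
    proof (rule has_field_derivative_transform_within_open[of _ _ _ "{0<..<L}"])
      show "(flux L f \<eta> V (\<rho> t) (\<lambda>x. \<rho>1 t x + \<rho>2 t x) has_real_derivative dtT T \<rho> t x) (at x)"
        using dxL_has_derivative_at[OF x] pde[OF t x] by simp
    qed (use t x expand in auto)
  next
    fix t assume t: "t \<in> {0<..<T}"
    then show "\<eta> * dxL L (\<rho> t) 0 + \<rho> t 0 * ((deriv ^^ 2) f (\<rho>1 t 0 + \<rho>2 t 0) *
          (dxL L (\<rho>1 t) 0 + dxL L (\<rho>2 t) 0) + dxL L V 0) = 0 \<and>
        \<eta> * dxL L (\<rho> t) L + \<rho> t L * ((deriv ^^ 2) f (\<rho>1 t L + \<rho>2 t L) *
          (dxL L (\<rho>1 t) L + dxL L (\<rho>2 t) L) + dxL L V L) = 0"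
      using boundary[OF t] expand[of t 0] expand[of t L] L by auto
  qed (use L T R in auto)
qed

lemma two_species_solution_if_classical:
  assumes L: "0 < L" and T: "0 < T" and f: "pressure_bounds a \<kappa> f" and \<eta>: "0 < \<eta>"
    and V1: "potential_ok L V1" and V2: "potential_ok L V2"
    and i1: "init_ok L r10" and i2: "init_ok L r20"
    and sol: "classical_solution L T f \<eta> V1 V2 r10 r20 \<rho>1 \<rho>2"
  shows "two_species_solution L T a \<kappa> (\<bar>lip_const L V1\<bar> + \<bar>lip_const L V2\<bar>) \<eta> f (dxL L V1) (dxL L V2)
    \<rho>1 \<rho>2 (\<lambda>t. dxL L (\<rho>1 t)) (\<lambda>t. dxL L (\<rho>2 t)) (dtT T \<rho>1) (dtT T \<rho>2)"
proof -
  have reg: "sol_regular L T \<rho>1" "sol_regular L T \<rho>2"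
    and pos: "\<And>t x. t \<in> {0..T} \<Longrightarrow> x \<in> {0..L} \<Longrightarrow> 0 < \<rho>1 t x + \<rho>2 t x"
    and init: "\<And>x. x \<in> {0..L} \<Longrightarrow> \<rho>1 0 x = r10 x \<and> \<rho>2 0 x = r20 x"
    and pde: "\<And>t x. t \<in> {0<..<T} \<Longrightarrow> x \<in> {0<..<L} \<Longrightarrow>
            flux L f \<eta> V1 (\<rho>1 t) (\<lambda>x. \<rho>1 t x + \<rho>2 t x) differentiable (at x) \<and>
            dtT T \<rho>1 t x = dxL L (flux L f \<eta> V1 (\<rho>1 t) (\<lambda>x. \<rho>1 t x + \<rho>2 t x)) x \<and>
            flux L f \<eta> V2 (\<rho>2 t) (\<lambda>x. \<rho>1 t x + \<rho>2 t x) differentiable (at x) \<and>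
            dtT T \<rho>2 t x = dxL L (flux L f \<eta> V2 (\<rho>2 t) (\<lambda>x. \<rho>1 t x + \<rho>2 t x)) x"
    and boundary: "\<And>t. t \<in> {0<..<T} \<Longrightarrow>
            flux L f \<eta> V1 (\<rho>1 t) (\<lambda>x. \<rho>1 t x + \<rho>2 t x) 0 = 0 \<and>
            flux L f \<eta> V1 (\<rho>1 t) (\<lambda>x. \<rho>1 t x + \<rho>2 t x) L = 0 \<and>
            flux L f \<eta> V2 (\<rho>2 t) (\<lambda>x. \<rho>1 t x + \<rho>2 t x) 0 = 0 \<and>
            flux L f \<eta> V2 (\<rho>2 t) (\<lambda>x. \<rho>1 t x + \<rho>2 t x) L = 0"
    using sol unfolding classical_solution_def Let_def by auto
  have "integral {0..L} (\<lambda>x. \<rho>1 0 x + \<rho>2 0 x) = integral {0..L} (\<lambda>x. r10 x + r20 x)"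
    by (rule integral_cong) (use init in simp)
  also have "\<dots> = 2"
    using init_ok_props[OF L i1] init_ok_props[OF L i2]
    by (subst integral_add) (auto intro: integrable_continuous_real)
  finally have mass: "integral {0..L} (\<lambda>x. \<rho>1 0 x + \<rho>2 0 x) = 2" .
  show ?thesis
  proof (rule two_species_solution.intro)
    show "no_flux_law L T \<rho>1 (\<lambda>t. dxL L (\<rho>1 t)) (dtT T \<rho>1) (\<lambda>t x. \<eta> * dxL L (\<rho>1 t) x + \<rho>1 t x *
      ((deriv ^^ 2) f (\<rho>1 t x + \<rho>2 t x) * (dxL L (\<rho>1 t) x + dxL L (\<rho>2 t) x) + dxL L V1 x))"
      by (rule no_flux_law_if_classical[OF L T f V1 reg(1) reg pos]) (use pde boundary in auto)
    show "no_flux_law L T \<rho>2 (\<lambda>t. dxL L (\<rho>2 t)) (dtT T \<rho>2) (\<lambda>t x. \<eta> * dxL L (\<rho>2 t) x + \<rho>2 t x *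
      ((deriv ^^ 2) f (\<rho>1 t x + \<rho>2 t x) * (dxL L (\<rho>1 t) x + dxL L (\<rho>2 t) x) + dxL L V2 x))"
      by (rule no_flux_law_if_classical[OF L T f V2 reg(2) reg pos]) (use pde boundary in auto)
  qed (use f \<eta> pos mass init init_ok_props(3)[OF L i1] init_ok_props(3)[OF L i2]
         potential_deriv_props[OF L V1] potential_deriv_props[OF L V2] in \<open>fastforce+\<close>)
qed

lemma set_integral_eq_integral_if_eq_on:
  fixes Q Q' :: "'a::euclidean_space \<Rightarrow> real"
  assumes R: "compact R" and cont: "continuous_on R Q'" and eq: "\<And>z. z \<in> R \<Longrightarrow> Q z = Q' z"
  shows "(LINT z:R|lborel. Q z) = integral R Q'"
proof -
  have "(LINT z:R|lborel. Q z) = (LINT z:R|lborel. Q' z)"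
    unfolding set_lebesgue_integral_def using eq by (metis indicator_simps(2) scale_zero_left)
  also have "\<dots> = integral R Q'"
    using set_borel_integral_eq_integral(2) borel_integrable_compact[OF R cont]
    unfolding set_integrable_def by blast
  finally show ?thesis .
qed

lemma gradient_Lp_norm_le:
  assumes L: "0 < L" and T: "0 < T" and f: "pressure_bounds a \<kappa> f" and \<eta>: "0 < \<eta>"
    and V1: "potential_ok L V1" and V2: "potential_ok L V2"
    and i1: "init_ok L r10" and i2: "init_ok L r20"
    and sol: "classical_solution L T f \<eta> V1 V2 r10 r20 \<rho>1 \<rho>2"
  defines "\<theta> \<equiv> (1 + a + entropy_exponent a) / 2"
  shows "(LINT z:{0..T} \<times> {0..L}|lborel.
           \<bar>dxL L (\<lambda>y. \<rho>1 (fst z) y + \<rho>2 (fst z) y) (snd z)\<bar> powr \<theta>) powr (1 / \<theta>)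
    \<le> gradient_bound L T a \<kappa> (\<bar>lip_const L V1\<bar> + \<bar>lip_const L V2\<bar>) powr (1 / \<theta>)"
proof -
  interpret two_species_solution L T a \<kappa> "\<bar>lip_const L V1\<bar> + \<bar>lip_const L V2\<bar>" \<eta> f "dxL L V1" "dxL L V2"
    \<rho>1 \<rho>2 "\<lambda>t. dxL L (\<rho>1 t)" "\<lambda>t. dxL L (\<rho>2 t)" "dtT T \<rho>1" "dtT T \<rho>2"
    by (rule two_species_solution_if_classical[OF L T f \<eta> V1 V2 i1 i2 sol])
  define Q where "Q = (\<lambda>(t,x). \<bar>dxL L (\<rho>1 t) x + dxL L (\<rho>2 t) x\<bar> powr \<theta>)"
  have \<theta>: "0 < \<theta>" unfolding \<theta>_def using a \<beta> by simp
  have cont: "continuous_on ({0..T} \<times> {0..L}) Q"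
    unfolding Q_def using continuous_on_sigma_x \<theta>
    by (intro continuous_on_case_prod_compose[of UNIV "\<lambda>p. \<bar>p\<bar> powr \<theta>"]
        continuous_on_powr' continuous_on_rabs continuous_on_id continuous_on_const) auto
  have "(LINT z:{0..T} \<times> {0..L}|lborel. \<bar>dxL L (\<lambda>y. \<rho>1 (fst z) y + \<rho>2 (fst z) y) (snd z)\<bar> powr \<theta>)
      = integral ({0..T} \<times> {0..L}) Q"
  proof (rule set_integral_eq_integral_if_eq_on[OF compact_Times[OF compact_Icc compact_Icc] cont])
    fix z assume "z \<in> {0..T} \<times> {0..L}"
    then obtain t x where z: "z = (t, x)" and t: "t \<in> {0..T}" and x: "x \<in> {0..L}" by auto
    show "\<bar>dxL L (\<lambda>y. \<rho>1 (fst z) y + \<rho>2 (fst z) y) (snd z)\<bar> powr \<theta> = Q z"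
      unfolding Q_def z using dxL_eqI[OF L x sigma_has_derivative[OF t x]] by simp
  qed
  moreover have "integral ({0..T} \<times> {0..L}) Q \<le> gradient_bound L T a \<kappa> (\<bar>lip_const L V1\<bar> + \<bar>lip_const L V2\<bar>)"
    using integral_gradient_powr_le unfolding Q_def \<theta>_def .
  moreover have "0 \<le> integral ({0..T} \<times> {0..L}) Q"
  proof (rule integral_nonneg)
    show "Q integrable_on {0..T} \<times> {0..L}"
      using integrable_continuous[of "(0, 0)" "(T, L)" Q] cont by (simp add: cbox_Pair_eq box_real)
  qed (simp add: Q_def case_prod_beta)
  ultimately show ?thesis using \<theta> by (simp add: powr_mono2)
qed

text \<open>The estimate does not need \<open>\<eta> \<le> 1\<close>, (I4), the compatibility conditions or the
  positivity of \<open>r10 + r20\<close>.\<close>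

theorem proposition6p1:
  fixes \<alpha> \<kappa> L T l1 l2 :: real
  assumes "0 < L" and "0 < T"
  shows "\<exists>K5 \<theta>. 0 < K5 \<and> 1 < \<theta> \<and>
    (\<forall>f \<eta> V1 V2 r10 r20 \<rho>1 \<rho>2.
       (hyp1 f \<alpha> \<kappa> \<or> hyp2 L f \<alpha> \<kappa>) \<longrightarrow>
       0 < \<eta> \<longrightarrow> \<eta> \<le> 1 \<longrightarrow>
       potential_ok L V1 \<longrightarrow> potential_ok L V2 \<longrightarrow>
       lip_const L V1 = l1 \<longrightarrow> lip_const L V2 = l2 \<longrightarrow>
       init_ok L r10 \<longrightarrow> init_ok L r20 \<longrightarrow>
       (\<forall>x\<in>{0..L}. 0 < r10 x + r20 x) \<longrightarrow>
       compat L f \<eta> V1 V2 r10 r20 \<longrightarrow>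
       classical_solution L T f \<eta> V1 V2 r10 r20 \<rho>1 \<rho>2 \<longrightarrow>
       (LINT z:{0..T} \<times> {0..L}|lborel.
           \<bar>dxL L (\<lambda>y. \<rho>1 (fst z) y + \<rho>2 (fst z) y) (snd z)\<bar> powr \<theta>) powr (1 / \<theta>) \<le> K5)"
proof (cases "0 < \<alpha> \<and> \<alpha> < 1")
  case False
  then have "\<not> (hyp1 f \<alpha> \<kappa> \<or> hyp2 L f \<alpha> \<kappa>)" for f
    using pressure_bounds_if_hyp1 pressure_bounds_if_hyp2 unfolding pressure_bounds_def by blast
  then show ?thesis by (intro exI[of _ 1] exI[of _ 2]) auto
next
  case True
  define \<theta> where "\<theta> = (1 + \<alpha> + entropy_exponent \<alpha>) / 2"
  define K where "K = gradient_bound L T \<alpha> \<kappa> (\<bar>l1\<bar> + \<bar>l2\<bar>) powr (1 / \<theta>) + 1"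
  have "1 < \<theta>" unfolding \<theta>_def using entropy_exponent_bounds(3)[of \<alpha>] True by simp
  moreover have "0 < K" unfolding K_def by (simp add: add_nonneg_pos)
  moreover have "(LINT z:{0..T} \<times> {0..L}|lborel.
      \<bar>dxL L (\<lambda>y. \<rho>1 (fst z) y + \<rho>2 (fst z) y) (snd z)\<bar> powr \<theta>) powr (1 / \<theta>) \<le> K"
    if "hyp1 f \<alpha> \<kappa> \<or> hyp2 L f \<alpha> \<kappa>" "0 < \<eta>" "potential_ok L V1" "potential_ok L V2"
      "lip_const L V1 = l1" "lip_const L V2 = l2" "init_ok L r10" "init_ok L r20"
      "classical_solution L T f \<eta> V1 V2 r10 r20 \<rho>1 \<rho>2"
    for f \<eta> V1 V2 r10 r20 \<rho>1 \<rho>2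
    using gradient_Lp_norm_le[OF assms _ that(2-4,7-9)] that(1,5,6)
      pressure_bounds_if_hyp1 pressure_bounds_if_hyp2
    unfolding K_def \<theta>_def by fastforce
  ultimately show ?thesis by blast
qed

end
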